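(* For each $\lambda\in\Lambda$, $(Q_\lambda,B)$ is a polynomial-like map of degree $p+1$: $Q_\lambda(B)$ is a ball strictly containing $B$, and for every $w\in Q_\lambda(B)$ the equation $Q_\lambda(z)=w$ has exactly $p+1$ solutions in $B$, counted with multiplicity.
   Context: Let $p$ be a prime, $\mathbb C_p$ with $p$-adic absolute value, $|p|=1/p$. $\Lambda=\{\lambda\in\mathbb C_p:|\lambda-1|<1\}$, $P_\lambda(z)=\frac{\lambda}{p}z^p+\left(1-\frac{\lambda}{p}\right)z^{p+1}$, $\rho=p^{-1/(p-1)}$. Fix $\hat r\in|\mathbb C_p^*|$, $\hat r>1$, $B=\{z:|z|\le\hat r\}$; $\mathcal H(B)$ is the ring of power series $\sum a_iz^i$ convergent on $B$ with norm $\|f\|_B=\sup_i|a_i|\hat r^{\,i}$. Fix $Q\in\mathcal H(B)$ with $\|Q\|_B<\rho$, $Q^*_\lambda=P_\lambda+Q$, and let $h(\lambda)$ be the unique fixed point of $Q^*_\lambda$ in $\{z:|z-1|\le|Q(1)|/p\}$. Define $Q_\lambda(z)=P_\lambda(z+h(\lambda)-1)+Q(z+h(\lambda)-1)+1-h(\lambda)$ for $z\in B$. *)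

theory Defs
  imports "HOL-Analysis.Analysis" "HOL-Computational_Algebra.Polynomial"
begin

text \<open>A model of C_p: a field of characteristic 0 together with an absolute value av
  which is non-archimedean, complete, algebraically closed, with av p = 1/p, and in which
  the algebraic numbers are dense.  These properties characterise C_p up to isometric
  isomorphism (it is the completion of an algebraic closure of Q_p).\<close>

definition is_Cp :: "nat \<Rightarrow> ('a::field_char_0 \<Rightarrow> real) \<Rightarrow> bool" where
  "is_Cp p av \<longleftrightarrow>
     prime p \<and>
     (\<forall>x. av x \<ge> 0) \<and> (\<forall>x. av x = 0 \<longleftrightarrow> x = 0) \<and>
     (\<forall>x y. av (x * y) = av x * av y) \<and>
     (\<forall>x y. av (x + y) \<le> max (av x) (av y)) \<and>
     av (of_nat p) = 1 / real p \<and>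
     (\<forall>s :: nat \<Rightarrow> 'a. (\<forall>e>0. \<exists>N. \<forall>m\<ge>N. \<forall>n\<ge>N. av (s m - s n) < e) \<longrightarrow>
         (\<exists>L. (\<lambda>n. av (s n - L)) \<longlonglongrightarrow> 0)) \<and>
     (\<forall>q :: 'a poly. degree q > 0 \<longrightarrow> (\<exists>z. poly q z = 0)) \<and>
     (\<forall>x e. e > 0 \<longrightarrow> (\<exists>y. (\<exists>q :: rat poly. q \<noteq> 0 \<and> poly (map_poly of_rat q) y = 0)
                              \<and> av (x - y) < e))"

definition av_tendsto :: "('a::field_char_0 \<Rightarrow> real) \<Rightarrow> (nat \<Rightarrow> 'a) \<Rightarrow> 'a \<Rightarrow> bool" where
  "av_tendsto av s L \<longleftrightarrow> (\<lambda>n. av (s n - L)) \<longlonglongrightarrow> 0"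

definition ps_sums :: "('a::field_char_0 \<Rightarrow> real) \<Rightarrow> (nat \<Rightarrow> 'a) \<Rightarrow> 'a \<Rightarrow> 'a \<Rightarrow> bool" where
  "ps_sums av a z L \<longleftrightarrow> av_tendsto av (\<lambda>n. \<Sum>i<n. a i * z ^ i) L"

definition ps_eval :: "('a::field_char_0 \<Rightarrow> real) \<Rightarrow> (nat \<Rightarrow> 'a) \<Rightarrow> 'a \<Rightarrow> 'a" where
  "ps_eval av a z = (THE L. ps_sums av a z L)"

definition Bdisk :: "('a::field_char_0 \<Rightarrow> real) \<Rightarrow> 'a \<Rightarrow> real \<Rightarrow> 'a set" where
  "Bdisk av c r = {z. av (z - c) \<le> r}"

definition in_HB :: "('a::field_char_0 \<Rightarrow> real) \<Rightarrow> real \<Rightarrow> (nat \<Rightarrow> 'a) \<Rightarrow> bool" where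
  "in_HB av r a \<longleftrightarrow> (\<forall>z. av z \<le> r \<longrightarrow> (\<exists>L. ps_sums av a z L))"

definition HB_norm :: "('a::field_char_0 \<Rightarrow> real) \<Rightarrow> real \<Rightarrow> (nat \<Rightarrow> 'a) \<Rightarrow> real" where
  "HB_norm av r a = (SUP i. av (a i) * r ^ i)"

definition zero_mult :: "('a::field_char_0 \<Rightarrow> real) \<Rightarrow> ('a \<Rightarrow> 'a) \<Rightarrow> 'a \<Rightarrow> nat \<Rightarrow> bool" where
  "zero_mult av f z0 k \<longleftrightarrow> f z0 = 0 \<and>
     (\<exists>b :: nat \<Rightarrow> 'a. \<exists>d>0. (\<forall>z. av (z - z0) < d \<longrightarrow> ps_sums av b (z - z0) (f z)) \<and>
        (\<forall>i<k. b i = 0) \<and> b k \<noteq> 0)"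

definition P_lam :: "nat \<Rightarrow> 'a::field_char_0 \<Rightarrow> 'a \<Rightarrow> 'a" where
  "P_lam p lam z = lam / of_nat p * z ^ p + (1 - lam / of_nat p) * z ^ (p + 1)"

definition h_fix :: "nat \<Rightarrow> ('a::field_char_0 \<Rightarrow> real) \<Rightarrow> (nat \<Rightarrow> 'a) \<Rightarrow> 'a \<Rightarrow> 'a" where
  "h_fix p av q lam = (THE z. av (z - 1) \<le> av (ps_eval av q 1) / real p \<and>
                              P_lam p lam z + ps_eval av q z = z)"

definition Q_lam :: "nat \<Rightarrow> ('a::field_char_0 \<Rightarrow> real) \<Rightarrow> (nat \<Rightarrow> 'a) \<Rightarrow> 'a \<Rightarrow> 'a \<Rightarrow> 'a" where
  "Q_lam p av q lam z = (let h = h_fix p av q lam in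
      P_lam p lam (z + h - 1) + ps_eval av q (z + h - 1) + 1 - h)"

end

theory Submission
  imports Defs
begin

text \<open>
  The argument is the nonarchimedean Weierstrass preparation theorem in counting form. Call N the
  Weierstrass degree of a power series \<open>\<Sum> a\<^sub>k z\<^sup>k\<close> on the disk of radius R if
  \<open>|a\<^sub>k| R\<^sup>k \<longrightarrow> 0\<close> and \<open>|a\<^sub>N| R\<^sup>N\<close> is the last maximum of these numbers.
  Then the series has exactly N zeros in the closed disk, counted with multiplicity. A zero is
  found by successive approximation: truncate the Taylor expansion at the current point and take
  a root of the resulting polynomial, which algebraic closedness places in the right disk; the
  approximations form a Cauchy sequence. Dividing by \<open>z - z\<^sub>0\<close> lowers the Weierstrass degree
  by one, which gives the count by induction.

  Expanding \<open>Q\<^sub>\<lambda>\<close> at 0, the coefficient of \<open>z\<^sup>p\<^sup>+\<^sup>1\<close> has size p because of the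
  term \<open>1 - \<lambda>/p\<close>, and every other non-constant term is dominated on B by \<open>p r\<^sup>p\<^sup>+\<^sup>1\<close>, strictly so beyond
  degree p + 1, since \<open>\<parallel>Q\<parallel>\<^sub>B < 1\<close>. Hence \<open>Q\<^sub>\<lambda> - w\<close> has Weierstrass degree p + 1 on B
  exactly when w lies in the closed ball of radius \<open>p r\<^sup>p\<^sup>+\<^sup>1 > r\<close> around \<open>Q\<^sub>\<lambda>(0)\<close>.
  The same count with degree 1 shows that the fixed point h(\<lambda>) lies within distance 1 of 1,
  which is what keeps the expansion point inside the unit disk.
\<close>

section \<open>Nonarchimedean absolute values\<close>

locale nonarch_field =
  fixes av :: "'a::field_char_0 \<Rightarrow> real"
  assumes av_nonneg [simp]: "av x \<ge> 0"
    and av_eq_0_iff [simp]: "av x = 0 \<longleftrightarrow> x = 0"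
    and av_mult [simp]: "av (x * y) = av x * av y"
    and av_ultra: "av (x + y) \<le> max (av x) (av y)"

locale complete_nonarch_field = nonarch_field av for av :: "'a::field_char_0 \<Rightarrow> real" +
  assumes av_complete: "(\<And>e. e > 0 \<Longrightarrow> \<exists>N. \<forall>m\<ge>N. \<forall>n\<ge>N. av (s m - s n) < e) \<Longrightarrow>
    \<exists>L. (\<lambda>n. av (s n - L)) \<longlonglongrightarrow> 0"

locale alg_closed_nonarch_field = complete_nonarch_field av for av :: "'a::field_char_0 \<Rightarrow> real" +
  assumes alg_closed: "degree (f :: 'a poly) > 0 \<Longrightarrow> \<exists>z. poly f z = 0"

lemma is_Cp_imp_alg_closed_nonarch_field:
  assumes "is_Cp p av"
  shows "alg_closed_nonarch_field av"
proof -
  note C = assms[unfolded is_Cp_def]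
  have "\<forall>x. av x \<ge> 0" "\<forall>x. av x = 0 \<longleftrightarrow> x = 0" "\<forall>x y. av (x * y) = av x * av y"
    "\<forall>x y. av (x + y) \<le> max (av x) (av y)"
    "\<forall>f :: 'a poly. degree f > 0 \<longrightarrow> (\<exists>z. poly f z = 0)"
    "\<forall>s. (\<forall>e>0. \<exists>N. \<forall>m\<ge>N. \<forall>n\<ge>N. av (s m - s n) < e) \<longrightarrow> (\<exists>L. (\<lambda>n. av (s n - L)) \<longlonglongrightarrow> 0)"
    using C by simp_all
  then show ?thesis by unfold_locales simp_all
qed

lemma real_null_seq_iff: "(f \<longlonglongrightarrow> 0) \<longleftrightarrow> (\<forall>e>0. \<exists>N. \<forall>n\<ge>N. \<bar>f n :: real\<bar> < e)"
  unfolding LIMSEQ_iff by simp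

lemma null_seq_uniform_strict_bound:
  fixes \<beta> :: "nat \<Rightarrow> real"
  assumes "\<beta> \<longlonglongrightarrow> 0" "\<forall>i. \<beta> i \<ge> 0" "\<forall>i\<ge>K. \<beta> i < X"
  shows "\<exists>X'. 0 \<le> X' \<and> X' < X \<and> (\<forall>i\<ge>K. \<beta> i \<le> X')"
proof -
  have X: "X > 0" using assms(2,3) by (meson le_less_trans order_refl)
  obtain M where M: "\<forall>n\<ge>M. \<bar>\<beta> n\<bar> < X / 2"
    using assms(1) X unfolding real_null_seq_iff by (meson half_gt_zero)
  define X' where "X' = (if K < M then max (X / 2) (Max (\<beta> ` {K..<M})) else X / 2)"
  have fin: "finite (\<beta> ` {K..<M})" by simp
  have "Max (\<beta> ` {K..<M}) < X" if "K < M"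
    using assms(3) fin that by (subst Max_less_iff) auto
  then have "X' < X" unfolding X'_def using X by simp
  moreover have "\<beta> i \<le> X'" if i: "i \<ge> K" for i
  proof (cases "i < M")
    case True
    then have "\<beta> i \<le> Max (\<beta> ` {K..<M})" using i fin by (intro Max_ge) auto
    then show ?thesis unfolding X'_def using True i by (simp add: le_max_iff_disj)
  next
    case False
    then have "\<bar>\<beta> i\<bar> < X / 2" using M by simp
    then have "\<beta> i < X / 2" by linarith
    then show ?thesis unfolding X'_def by (simp add: le_max_iff_disj)
  qed
  moreover have "0 \<le> X'" unfolding X'_def using X by (simp add: le_max_iff_disj)
  ultimately show ?thesis by blast
qed

context nonarch_field
begin

lemma av_0 [simp]: "av 0 = 0"
  by simp

lemma av_pos: "x \<noteq> 0 \<Longrightarrow> av x > 0"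
  using av_nonneg[of x] av_eq_0_iff[of x] by linarith

lemma av_1 [simp]: "av 1 = 1"
  using av_mult[of 1 1] by simp

lemma av_uminus [simp]: "av (- x) = av x"
proof -
  have "av (-1) * av (-1) = 1" using av_mult[of "-1" "-1"] by simp
  then have "av (-1) ^ 2 = 1 ^ 2" by (simp add: power2_eq_square)
  then have "av (-1) = 1" using av_nonneg[of "-1"] power2_eq_iff_nonneg[of "av (-1)" 1] by simp
  then show ?thesis using av_mult[of "-1" x] by simp
qed

lemma av_minus_commute: "av (x - y) = av (y - x)"
  using av_uminus[of "x - y"] by simp

lemma av_power [simp]: "av (x ^ n) = av x ^ n"
  by (induction n) auto

lemma av_inverse [simp]: "av (inverse x) = inverse (av x)"
proof (cases "x = 0")
  case False
  then have "av x * av (inverse x) = 1" using av_mult[of x "inverse x"] by simp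
  then show ?thesis by (metis inverse_unique)
qed simp

lemma av_divide [simp]: "av (x / y) = av x / av y"
  by (simp only: divide_inverse av_mult av_inverse)

lemma av_add_le: "av x \<le> X \<Longrightarrow> av y \<le> X \<Longrightarrow> av (x + y) \<le> X"
  using av_ultra[of x y] by linarith

lemma av_add_less: "av x < X \<Longrightarrow> av y < X \<Longrightarrow> av (x + y) < X"
  using av_ultra[of x y] by linarith

lemma av_diff_le: "av x \<le> X \<Longrightarrow> av y \<le> X \<Longrightarrow> av (x - y) \<le> X"
  using av_add_le[of x X "- y"] by simp

lemma av_triangle: "av (x - z) \<le> max (av (x - y)) (av (y - z))"
  using av_ultra[of "x - y" "y - z"] by simp

lemma av_of_nat_le_1: "av (of_nat n) \<le> 1"
proof (induction n)
  case (Suc n)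
  then show ?case using av_add_le[of 1 1 "of_nat n"] by simp
qed simp

lemma av_add_eq_dominant:
  assumes "av x < av y"
  shows "av (x + y) = av y"
proof -
  have "av y \<le> max (av (x + y)) (av (- x))" using av_ultra[of "x + y" "- x"] by simp
  then show ?thesis using av_add_le[of x "av y" y] assms by auto
qed

lemma av_sum_le: "(\<And>i. i \<in> A \<Longrightarrow> av (f i) \<le> X) \<Longrightarrow> 0 \<le> X \<Longrightarrow> av (sum f A) \<le> X"
  by (induction A rule: infinite_finite_induct) (simp_all add: av_add_le)

lemma av_sum_less: "(\<And>i. i \<in> A \<Longrightarrow> av (f i) < X) \<Longrightarrow> 0 < X \<Longrightarrow> av (sum f A) < X"
  by (induction A rule: infinite_finite_induct) (simp_all add: av_add_less)


section \<open>Series\<close>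

abbreviation av_sums :: "(nat \<Rightarrow> 'a) \<Rightarrow> 'a \<Rightarrow> bool" where
  "av_sums x L \<equiv> av_tendsto av (\<lambda>n. \<Sum>i<n. x i) L"

definition av_suminf :: "(nat \<Rightarrow> 'a) \<Rightarrow> 'a" where
  "av_suminf x = (THE L. av_sums x L)"

lemma av_tendsto_iff: "av_tendsto av s L \<longleftrightarrow> (\<forall>e>0. \<exists>N. \<forall>n\<ge>N. av (s n - L) < e)"
  unfolding av_tendsto_def LIMSEQ_iff by simp

lemma av_tendsto_unique:
  assumes "av_tendsto av s L1" "av_tendsto av s L2"
  shows "L1 = L2"
proof (rule ccontr)
  assume "L1 \<noteq> L2"
  then have pos: "av (L1 - L2) > 0" by (simp add: av_pos)
  obtain N1 where N1: "\<forall>n\<ge>N1. av (s n - L1) < av (L1 - L2)"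
    using assms(1) pos unfolding av_tendsto_iff by blast
  obtain N2 where N2: "\<forall>n\<ge>N2. av (s n - L2) < av (L1 - L2)"
    using assms(2) pos unfolding av_tendsto_iff by blast
  define n where "n = max N1 N2"
  have "av (L1 - L2) \<le> max (av (L1 - s n)) (av (s n - L2))" by (rule av_triangle)
  also have "\<dots> < av (L1 - L2)" using N1 N2 unfolding n_def
    by (simp add: av_minus_commute[of L1])
  finally show False by simp
qed

lemma av_tendsto_approx:
  assumes "av_tendsto av s L" "(\<lambda>n. av (t n - s n)) \<longlonglongrightarrow> 0"
  shows "av_tendsto av t L"
  unfolding av_tendsto_def
proof (rule tendsto_sandwich[OF _ _ tendsto_const])
  show "(\<lambda>n. max (av (t n - s n)) (av (s n - L))) \<longlonglongrightarrow> 0"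
    using tendsto_max[OF assms(2) assms(1)[unfolded av_tendsto_def]] by simp
  show "\<forall>\<^sub>F n in sequentially. av (t n - L) \<le> max (av (t n - s n)) (av (s n - L))"
    using av_triangle by simp
qed simp

lemma av_tendsto_const: "av_tendsto av (\<lambda>n. c) c"
  unfolding av_tendsto_def by simp

lemma av_tendsto_add:
  assumes "av_tendsto av s L" "av_tendsto av t M"
  shows "av_tendsto av (\<lambda>n. s n + t n) (L + M)"
  unfolding av_tendsto_def
proof (rule tendsto_sandwich[OF _ _ tendsto_const])
  show "(\<lambda>n. max (av (s n - L)) (av (t n - M))) \<longlonglongrightarrow> 0"
    using tendsto_max[OF assms[unfolded av_tendsto_def]] by simp
  show "\<forall>\<^sub>F n in sequentially. av (s n + t n - (L + M)) \<le> max (av (s n - L)) (av (t n - M))"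
    using av_ultra by (simp add: add_diff_add)
qed simp

lemma av_tendsto_cmult:
  assumes "av_tendsto av s L"
  shows "av_tendsto av (\<lambda>n. c * s n) (c * L)"
proof -
  have "(\<lambda>n. av c * av (s n - L)) \<longlonglongrightarrow> av c * 0"
    using assms unfolding av_tendsto_def by (intro tendsto_mult tendsto_const)
  then show ?thesis unfolding av_tendsto_def by (simp add: right_diff_distrib[symmetric])
qed

lemma av_tendsto_Suc_iff: "av_tendsto av (\<lambda>n. s (Suc n)) L \<longleftrightarrow> av_tendsto av s L"
  unfolding av_tendsto_def using filterlim_sequentially_Suc[of "\<lambda>n. av (s n - L)"] by simp

lemma av_tendsto_closed_ball:
  assumes "av_tendsto av s L" "\<And>n. av (s n) \<le> R"
  shows "av L \<le> R"
proof (rule ccontr)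
  assume "\<not> av L \<le> R"
  moreover have "av L > 0" using calculation assms(2)[of 0] av_nonneg[of "s 0"] by linarith
  moreover obtain n where "av (s n - L) < av L"
    using assms(1) calculation(2) unfolding av_tendsto_iff by blast
  moreover have "av L \<le> max (av (s n)) (av (L - s n))" using av_ultra[of "s n" "L - s n"] by simp
  ultimately show False using assms(2)[of n] by (simp add: av_minus_commute)
qed

lemma av_sums_unique: "av_sums x L \<Longrightarrow> av_suminf x = L"
  unfolding av_suminf_def by (blast intro: av_tendsto_unique)

lemma av_sums_finite:
  assumes "\<forall>i\<ge>K. x i = 0"
  shows "av_sums x (\<Sum>i<K. x i)"
  unfolding av_tendsto_def
proof (rule tendsto_eventually)
  show "\<forall>\<^sub>F n in sequentially. av ((\<Sum>i<n. x i) - (\<Sum>i<K. x i)) = 0"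
    unfolding eventually_sequentially
  proof (intro exI allI impI)
    fix n assume "n \<ge> K"
    then have "(\<Sum>i<n. x i) = (\<Sum>i<K. x i)" using assms by (intro sum.mono_neutral_right) auto
    then show "av ((\<Sum>i<n. x i) - (\<Sum>i<K. x i)) = 0" by simp
  qed
qed

lemma ps_eval_eqI: "ps_sums av a z L \<Longrightarrow> ps_eval av a z = L"
  unfolding ps_eval_def ps_sums_def by (blast intro: av_tendsto_unique)

lemma ps_sums_at_0: "ps_sums av b 0 L \<Longrightarrow> L = b 0"
  using av_sums_finite[of 1 "\<lambda>i. b i * 0 ^ i"] unfolding ps_sums_def
  by (auto intro: av_tendsto_unique)

lemma ps_sums_add:
  "ps_sums av a z L \<Longrightarrow> ps_sums av b z M \<Longrightarrow> ps_sums av (\<lambda>k. a k + b k) z (L + M)"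
  unfolding ps_sums_def by (drule (1) av_tendsto_add) (simp add: sum.distrib distrib_right)

lemma ps_sums_finite: "\<forall>k\<ge>K. a k = 0 \<Longrightarrow> ps_sums av a z (\<Sum>k<K. a k * z ^ k)"
  unfolding ps_sums_def by (rule av_sums_finite) simp

lemma av_sums_terms_null:
  assumes "av_sums x L"
  shows "(\<lambda>n. av (x n)) \<longlonglongrightarrow> 0"
proof -
  have "av_tendsto av (\<lambda>n. \<Sum>i<Suc n. x i) L"
    using assms by (subst av_tendsto_Suc_iff)
  from av_tendsto_add[OF this av_tendsto_cmult[OF assms, of "-1"]]
  have "av_tendsto av (\<lambda>n. (\<Sum>i<Suc n. x i) + -1 * (\<Sum>i<n. x i)) (L + -1 * L)" .
  then show ?thesis unfolding av_tendsto_def by simp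
qed

lemma av_sums_tail_le:
  assumes "av_sums x L" "0 \<le> X" "\<forall>i\<ge>K. av (x i) \<le> X"
  shows "av (L - (\<Sum>i<K. x i)) \<le> X"
proof (rule ccontr)
  assume c: "\<not> ?thesis"
  then have pos: "av (L - (\<Sum>i<K. x i)) > 0" using assms(2) by linarith
  obtain N where N: "\<forall>n\<ge>N. av ((\<Sum>i<n. x i) - L) < av (L - (\<Sum>i<K. x i))"
    using assms(1) pos unfolding av_tendsto_iff by blast
  define n where "n = max N K"
  have "(\<Sum>i<n. x i) = (\<Sum>i<K. x i) + (\<Sum>i\<in>{K..<n}. x i)"
    using sum.atLeastLessThan_concat[of 0 K n x] by (simp add: n_def atLeast0LessThan)
  moreover have "av (\<Sum>i\<in>{K..<n}. x i) \<le> X" by (rule av_sum_le) (use assms in auto)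
  ultimately have "av ((\<Sum>i<n. x i) - (\<Sum>i<K. x i)) \<le> X" by simp
  moreover have "av (L - (\<Sum>i<n. x i)) < av (L - (\<Sum>i<K. x i))"
    using N unfolding n_def by (simp add: av_minus_commute[of L])
  ultimately show False using c av_triangle[of L "\<Sum>i<K. x i" "\<Sum>i<n. x i"] by linarith
qed

lemma av_sums_tail_less:
  assumes "av_sums x L" "\<forall>i\<ge>K. av (x i) < X"
  shows "av (L - (\<Sum>i<K. x i)) < X"
proof -
  obtain X' where "0 \<le> X'" "X' < X" "\<forall>i\<ge>K. av (x i) \<le> X'"
    using null_seq_uniform_strict_bound[of "\<lambda>i. av (x i)" K X] av_sums_terms_null[OF assms(1)] assms(2)
    by auto
  with av_sums_tail_le[OF assms(1)] show ?thesis by (meson le_less_trans)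
qed

end

context complete_nonarch_field
begin

lemma av_sums_av_suminf:
  assumes "(\<lambda>n. av (x n)) \<longlonglongrightarrow> 0"
  shows "av_sums x (av_suminf x)"
proof -
  have cauchy: "\<exists>N. \<forall>m\<ge>N. \<forall>n\<ge>N. av ((\<Sum>i<m. x i) - (\<Sum>i<n. x i)) < e" if e: "e > 0" for e
  proof -
    obtain N where N: "\<forall>n\<ge>N. av (x n) < e" using assms e unfolding real_null_seq_iff by auto
    have block: "av (\<Sum>i\<in>{a..<b}. x i) < e" if "a \<ge> N" for a b
      by (rule av_sum_less) (use N that e in auto)
    have "av ((\<Sum>i<m. x i) - (\<Sum>i<n. x i)) < e" if "n \<le> m" "n \<ge> N" for m n
    proof -
      have "(\<Sum>i<m. x i) = (\<Sum>i<n. x i) + (\<Sum>i\<in>{n..<m}. x i)"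
        using sum.atLeastLessThan_concat[of 0 n m x] that by (simp add: atLeast0LessThan)
      then show ?thesis using block[of n m] that by simp
    qed
    then show ?thesis by (metis av_minus_commute nat_le_linear)
  qed
  have "\<exists>L. (\<lambda>n. av ((\<Sum>i<n. x i) - L)) \<longlonglongrightarrow> 0" by (rule av_complete) (rule cauchy)
  then obtain L where "av_sums x L" unfolding av_tendsto_def ..
  then show ?thesis using av_sums_unique by simp
qed

lemma av_convergent_if_steps_null:
  assumes "(\<lambda>n. av (x (Suc n) - x n)) \<longlonglongrightarrow> 0"
  shows "\<exists>L. av_tendsto av x L"
proof -
  have "av_tendsto av (\<lambda>n. x 0 + (\<Sum>i<n. x (Suc i) - x i)) (x 0 + av_suminf (\<lambda>i. x (Suc i) - x i))"
    using av_sums_av_suminf[OF assms] by (intro av_tendsto_add av_tendsto_const)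
  then show ?thesis by (auto simp: sum_lessThan_telescope)
qed

end

section \<open>Restricted power series\<close>

context nonarch_field
begin

text \<open>A nonarchimedean series converges iff its terms tend to 0, so when R is a value of av this
  is convergence of the power series on the closed disk of radius R.\<close>

definition restricted :: "(nat \<Rightarrow> 'a) \<Rightarrow> real \<Rightarrow> bool" where
  "restricted a R \<longleftrightarrow> (\<lambda>k. av (a k) * R ^ k) \<longlonglongrightarrow> 0"

lemma restricted_eventually_le:
  assumes "restricted a R" "e > 0"
  shows "\<exists>M. \<forall>j\<ge>M. av (a j) * R ^ j \<le> e"
proof -
  obtain M where "\<forall>j\<ge>M. \<bar>av (a j) * R ^ j\<bar> < e"
    using assms unfolding restricted_def real_null_seq_iff by blast
  then show ?thesis by (meson abs_less_iff less_imp_le)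
qed

lemma restricted_add:
  assumes "restricted a R" "restricted b R" "R \<ge> 0"
  shows "restricted (\<lambda>k. a k + b k) R"
  unfolding restricted_def
proof (rule Lim_null_comparison)
  show "\<forall>\<^sub>F k in sequentially. norm (av (a k + b k) * R ^ k) \<le> av (a k) * R ^ k + av (b k) * R ^ k"
  proof (rule always_eventually, rule allI)
    fix k
    have "av (a k + b k) \<le> av (a k) + av (b k)"
      using av_ultra[of "a k" "b k"] av_nonneg[of "a k"] av_nonneg[of "b k"] by linarith
    then show "norm (av (a k + b k) * R ^ k) \<le> av (a k) * R ^ k + av (b k) * R ^ k"
      using assms(3) by (simp add: abs_mult mult_right_mono flip: distrib_right)
  qed
  show "(\<lambda>k. av (a k) * R ^ k + av (b k) * R ^ k) \<longlonglongrightarrow> 0"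
    using tendsto_add[OF assms(1,2)[unfolded restricted_def]] by simp
qed

lemma restricted_finite: "\<forall>k\<ge>K. a k = 0 \<Longrightarrow> restricted a R"
  unfolding restricted_def by (rule tendsto_eventually) (auto simp: eventually_sequentially)

lemma restricted_smaller_radius:
  assumes "restricted a R" "0 \<le> R'" "R' \<le> R"
  shows "restricted a R'"
  unfolding restricted_def
proof (rule Lim_null_comparison[OF always_eventually assms(1)[unfolded restricted_def]])
  show "\<forall>k. norm (av (a k) * R' ^ k) \<le> av (a k) * R ^ k"
    using assms(2,3) by (simp add: abs_mult mult_left_mono power_mono)
qed

lemma av_ps_term_le:
  "0 \<le> R \<Longrightarrow> av z \<le> R \<Longrightarrow> av (a k * z ^ k) \<le> av (a k) * R ^ k"
  by (simp add: mult_left_mono power_mono)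

end

context complete_nonarch_field
begin

lemma ps_eval_eq_av_suminf: "ps_eval av a z = av_suminf (\<lambda>i. a i * z ^ i)"
  by (simp only: ps_eval_def ps_sums_def av_suminf_def)

lemma ps_sums_ps_eval:
  assumes "restricted a R" "av z \<le> R"
  shows "ps_sums av a z (ps_eval av a z)"
proof -
  have "\<forall>k. norm (av (a k * z ^ k)) \<le> av (a k) * R ^ k"
    using av_ps_term_le[OF order_trans[OF av_nonneg assms(2)] assms(2)] by simp
  then have "(\<lambda>k. av (a k * z ^ k)) \<longlonglongrightarrow> 0"
    using assms(1) unfolding restricted_def by (rule Lim_null_comparison[OF always_eventually])
  then show ?thesis unfolding ps_sums_def ps_eval_eq_av_suminf by (rule av_sums_av_suminf)
qed

lemma ps_eval_bound:
  assumes "restricted a R" "av z \<le> R" "0 \<le> X" "\<forall>k. av (a k) * R ^ k \<le> X"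
  shows "av (ps_eval av a z) \<le> X"
proof -
  have "av (a i * z ^ i) \<le> X" for i
    using av_ps_term_le[OF order_trans[OF av_nonneg assms(2)] assms(2), of a i] assms(4)
    by (meson order_trans)
  then show ?thesis
    using av_sums_tail_le[OF ps_sums_ps_eval[OF assms(1,2), unfolded ps_sums_def] assms(3), of 0] by simp
qed

text \<open>The Taylor coefficients and the synthetic division coefficients are both series dominated,
  term by term, by a tail of a restricted power series.\<close>

lemma dominated_terms_null:
  assumes "R > 0" "restricted a R" "\<And>i. av (t i) * R ^ k \<le> av (a (i + k)) * R ^ (i + k)"
  shows "(\<lambda>i. av (t i)) \<longlonglongrightarrow> 0"
proof (rule Lim_null_comparison[OF always_eventually])
  show "\<forall>i. norm (av (t i)) \<le> av (a (i + k)) * R ^ (i + k) / R ^ k"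
    using assms(1,3) by (simp add: pos_le_divide_eq)
  have "(\<lambda>i. av (a (i + k)) * R ^ (i + k)) \<longlonglongrightarrow> 0"
    using assms(2) LIMSEQ_ignore_initial_segment[of "\<lambda>k. av (a k) * R ^ k" 0 k]
    by (simp add: restricted_def)
  then show "(\<lambda>i. av (a (i + k)) * R ^ (i + k) / R ^ k) \<longlonglongrightarrow> 0"
    using tendsto_divide_zero by blast
qed

lemma dominated_tail_le:
  assumes R: "R > 0" and a: "restricted a R"
    and dom: "\<And>i. av (t i) * R ^ k \<le> av (a (i + k)) * R ^ (i + k)"
    and X: "0 \<le> X" "\<forall>j\<ge>m + k. av (a j) * R ^ j \<le> X"
  shows "av (av_suminf t - (\<Sum>i<m. t i)) * R ^ k \<le> X"
proof -
  have "av (av_suminf t - (\<Sum>i<m. t i)) \<le> X / R ^ k"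
  proof (rule av_sums_tail_le[OF av_sums_av_suminf[OF dominated_terms_null[OF R a dom]]])
    show "0 \<le> X / R ^ k" using X R by simp
    show "\<forall>i\<ge>m. av (t i) \<le> X / R ^ k"
    proof (intro allI impI)
      fix i assume "i \<ge> m"
      then have "av (t i) * R ^ k \<le> X" using dom[of i] X(2)[rule_format, of "i + k"] by simp
      then show "av (t i) \<le> X / R ^ k" using R by (simp add: pos_le_divide_eq)
    qed
  qed
  then show ?thesis using R by (simp add: pos_le_divide_eq)
qed

lemma dominated_tail_less:
  assumes R: "R > 0" and a: "restricted a R"
    and dom: "\<And>i. av (t i) * R ^ k \<le> av (a (i + k)) * R ^ (i + k)"
    and Y: "\<forall>j\<ge>m + k. av (a j) * R ^ j < Y"
  shows "av (av_suminf t - (\<Sum>i<m. t i)) * R ^ k < Y"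
proof -
  have "av (av_suminf t - (\<Sum>i<m. t i)) < Y / R ^ k"
  proof (rule av_sums_tail_less[OF av_sums_av_suminf[OF dominated_terms_null[OF R a dom]]])
    show "\<forall>i\<ge>m. av (t i) < Y / R ^ k"
    proof (intro allI impI)
      fix i assume "i \<ge> m"
      then have "av (t i) * R ^ k < Y" using dom[of i] Y[rule_format, of "i + k"] by simp
      then show "av (t i) < Y / R ^ k" using R by (simp add: pos_less_divide_eq)
    qed
  qed
  then show ?thesis using R by (simp add: pos_less_divide_eq)
qed

lemma dominated_tails_restricted:
  assumes R: "R > 0" and a: "restricted a R"
    and dom: "\<And>k i. av (t k i) * R ^ k \<le> av (a (i + k)) * R ^ (i + k)"
  shows "restricted (\<lambda>k. av_suminf (t k)) R"
  unfolding restricted_def real_null_seq_iff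
proof (intro allI impI)
  fix e :: real assume e: "e > 0"
  obtain M where M: "\<forall>j\<ge>M. av (a j) * R ^ j \<le> e / 2"
    using restricted_eventually_le[OF a] e by (meson half_gt_zero)
  show "\<exists>N. \<forall>k\<ge>N. \<bar>av (av_suminf (t k)) * R ^ k\<bar> < e"
  proof (intro exI allI impI)
    fix k assume "k \<ge> M"
    then have "av (av_suminf (t k)) * R ^ k \<le> e / 2"
      using dominated_tail_le[OF R a dom, of "e / 2" 0] M e by simp
    moreover have "0 \<le> av (av_suminf (t k)) * R ^ k" using R by simp
    ultimately show "\<bar>av (av_suminf (t k)) * R ^ k\<bar> < e" using e by linarith
  qed
qed

end

section \<open>Taylor expansion and synthetic division\<close>

lemma sum_triangle_reindex:
  fixes f :: "nat \<Rightarrow> nat \<Rightarrow> 'b::comm_monoid_add"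
  shows "(\<Sum>j<K. \<Sum>k\<le>j. f j k) = (\<Sum>k<K. \<Sum>i<K - k. f (i + k) k)"
proof -
  have "(\<Sum>j<K. \<Sum>k\<le>j. f j k) = (\<Sum>(j, k)\<in>Sigma {..<K} (\<lambda>j. {..j}). f j k)"
    by (rule sum.Sigma) auto
  also have "\<dots> = (\<Sum>(k, i)\<in>Sigma {..<K} (\<lambda>k. {..<K - k}). f (i + k) k)"
    by (rule sum.reindex_bij_witness[where i="\<lambda>(k, i). (i + k, k)" and j="\<lambda>(j, k). (k, j - k)"]) auto
  also have "\<dots> = (\<Sum>k<K. \<Sum>i<K - k. f (i + k) k)"
    by (rule sum.Sigma[symmetric]) auto
  finally show ?thesis .
qed

context complete_nonarch_field
begin

definition taylor_term :: "(nat \<Rightarrow> 'a) \<Rightarrow> 'a \<Rightarrow> nat \<Rightarrow> nat \<Rightarrow> 'a" where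
  "taylor_term a c k i = a (i + k) * of_nat ((i + k) choose k) * c ^ i"

definition taylor_coeff :: "(nat \<Rightarrow> 'a) \<Rightarrow> 'a \<Rightarrow> nat \<Rightarrow> 'a" where
  "taylor_coeff a c k = av_suminf (taylor_term a c k)"

lemma taylor_term_dominated:
  assumes "R > 0" "av c \<le> R"
  shows "av (taylor_term a c k i) * R ^ k \<le> av (a (i + k)) * R ^ (i + k)"
proof -
  have "av (of_nat ((i + k) choose k) :: 'a) * av c ^ i \<le> 1 * R ^ i"
    using assms by (intro mult_mono power_mono av_of_nat_le_1) auto
  then have "av (taylor_term a c k i) \<le> av (a (i + k)) * R ^ i"
    unfolding taylor_term_def by (simp add: mult_left_mono mult.assoc)
  then show ?thesis using assms(1) by (simp add: power_add mult_right_mono mult.assoc)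
qed

lemma taylor_coeff_0: "taylor_coeff a c 0 = ps_eval av a c"
  unfolding taylor_coeff_def taylor_term_def ps_eval_eq_av_suminf by simp

lemma taylor_coeff_bound:
  assumes "R > 0" "restricted a R" "av c \<le> R" "0 \<le> X" "\<forall>j\<ge>k. av (a j) * R ^ j \<le> X"
  shows "av (taylor_coeff a c k) * R ^ k \<le> X"
  using dominated_tail_le[where t="taylor_term a c k", OF assms(1,2) taylor_term_dominated[OF assms(1,3)]
      assms(4), of 0] assms(5)
  unfolding taylor_coeff_def by simp

lemma taylor_coeff_approx:
  assumes "R > 0" "restricted a R" "av c \<le> R" "\<forall>j>k. av (a j) * R ^ j < Y"
  shows "av (taylor_coeff a c k - a k) * R ^ k < Y"
  using dominated_tail_less[where t="taylor_term a c k",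
      OF assms(1,2) taylor_term_dominated[OF assms(1,3)], of 1] assms(4)
  unfolding taylor_coeff_def by (simp add: taylor_term_def)

lemma taylor_coeff_restricted:
  assumes "R > 0" "restricted a R" "av c \<le> R"
  shows "restricted (taylor_coeff a c) R"
  unfolding taylor_coeff_def
  by (rule dominated_tails_restricted[where t="taylor_term a c",
        OF assms(1,2) taylor_term_dominated[OF assms(1,3)]])

lemma sum_binomial_taylor_term:
  "(\<Sum>j<K. a j * (c + s) ^ j) = (\<Sum>k<K. s ^ k * (\<Sum>i<K - k. taylor_term a c k i))"
proof -
  have "(c + s) ^ j = (\<Sum>k\<le>j. of_nat (j choose k) * s ^ k * c ^ (j - k))" for j
    using binomial_ring[of s c j] by (simp add: add.commute)
  then have "(\<Sum>j<K. a j * (c + s) ^ j)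
      = (\<Sum>j<K. \<Sum>k\<le>j. a j * (of_nat (j choose k) * s ^ k * c ^ (j - k)))"
    by (simp add: sum_distrib_left)
  also have "\<dots> = (\<Sum>k<K. s ^ k * (\<Sum>i<K - k. taylor_term a c k i))"
    unfolding sum_triangle_reindex by (simp add: taylor_term_def sum_distrib_left mult_ac)
  finally show ?thesis .
qed

lemma taylor_partial_sum_error:
  assumes R: "R > 0" and a: "restricted a R" and c: "av c \<le> R" and s: "av s \<le> R"
    and e: "0 \<le> e" "\<forall>j\<ge>K. av (a j) * R ^ j \<le> e"
  shows "av ((\<Sum>k<K. taylor_coeff a c k * s ^ k) - (\<Sum>j<K. a j * (c + s) ^ j)) \<le> e"
proof -
  define t where "t = taylor_term a c"
  have term_le: "av (s ^ k * (av_suminf (t k) - (\<Sum>i<K - k. t k i))) \<le> e" if "k < K" for k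
  proof -
    have "av (av_suminf (t k) - (\<Sum>i<K - k. t k i)) * R ^ k \<le> e"
      unfolding t_def
      by (rule dominated_tail_le[where t="taylor_term a c k", OF R a taylor_term_dominated[OF R c] e(1)])
        (use e(2) that in simp)
    moreover have "av s ^ k \<le> R ^ k" using s by (simp add: power_mono)
    ultimately show ?thesis
      using mult_right_mono[of "av s ^ k" "R ^ k" "av (av_suminf (t k) - (\<Sum>i<K - k. t k i))"]
      by (simp add: mult.commute)
  qed
  have "(\<Sum>k<K. taylor_coeff a c k * s ^ k) - (\<Sum>j<K. a j * (c + s) ^ j)
      = (\<Sum>k<K. s ^ k * (av_suminf (t k) - (\<Sum>i<K - k. t k i)))"
    unfolding sum_binomial_taylor_term sum_subtractf[symmetric] taylor_coeff_def t_def
    by (intro sum.cong refl) (simp add: right_diff_distrib mult.commute)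
  moreover have "av (\<Sum>k<K. s ^ k * (av_suminf (t k) - (\<Sum>i<K - k. t k i))) \<le> e"
    by (rule av_sum_le) (use term_le e in auto)
  ultimately show ?thesis by simp
qed

lemma ps_sums_taylor_coeff:
  assumes R: "R > 0" and a: "restricted a R" and c: "av c \<le> R" and s: "av s \<le> R"
  shows "ps_sums av (taylor_coeff a c) s (ps_eval av a (c + s))"
proof -
  define err where "err K = av ((\<Sum>k<K. taylor_coeff a c k * s ^ k) - (\<Sum>j<K. a j * (c + s) ^ j))" for K
  have A: "av_sums (\<lambda>j. a j * (c + s) ^ j) (ps_eval av a (c + s))"
    using ps_sums_ps_eval[OF a av_add_le[OF c s]] unfolding ps_sums_def .
  have "err \<longlonglongrightarrow> 0"
    unfolding real_null_seq_iff
  proof (intro allI impI)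
    fix e :: real assume e: "e > 0"
    then obtain M where "\<forall>j\<ge>M. av (a j) * R ^ j \<le> e / 2"
      using restricted_eventually_le[OF a] by (meson half_gt_zero)
    then have "err K \<le> e / 2" if "K \<ge> M" for K
      unfolding err_def using taylor_partial_sum_error[OF R a c s, of "e / 2" K] that e by simp
    moreover have "err K \<ge> 0" for K unfolding err_def by simp
    ultimately have "\<bar>err K\<bar> < e" if "K \<ge> M" for K using e that by fastforce
    then show "\<exists>N. \<forall>K\<ge>N. \<bar>err K\<bar> < e" by blast
  qed
  from av_tendsto_approx[OF A this[unfolded err_def]] show ?thesis unfolding ps_sums_def .
qed

lemma ps_eval_lipschitz:
  assumes R: "R > 0" and a: "restricted a R" and x: "av x \<le> R" and y: "av y \<le> R"
    and A: "0 \<le> A" "\<forall>k. av (a k) * R ^ k \<le> A"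
  shows "av (ps_eval av a x - ps_eval av a y) \<le> A * av (x - y) / R"
proof -
  define s where "s = x - y"
  have s: "av s \<le> R" unfolding s_def using av_diff_le[OF x y] .
  have S: "av_sums (\<lambda>i. taylor_coeff a y i * s ^ i) (ps_eval av a x)"
    using ps_sums_taylor_coeff[OF R a y s] unfolding ps_sums_def s_def by simp
  have "av (taylor_coeff a y i * s ^ i) \<le> A * av s / R" if i: "i \<ge> 1" for i
  proof -
    have b: "av (taylor_coeff a y i) * R ^ i \<le> A"
      by (rule taylor_coeff_bound[OF R a y A(1)]) (use A(2) in simp)
    obtain j where j: "i = Suc j" using i by (cases i) auto
    have "av s ^ j \<le> R ^ j" using s by (simp add: power_mono)
    then have "av s ^ i \<le> av s * R ^ (i - 1)" unfolding j by (simp add: mult_left_mono)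
    then have "av (taylor_coeff a y i) * av s ^ i \<le> av (taylor_coeff a y i) * (av s * R ^ (i - 1))"
      by (rule mult_left_mono) simp
    also have "\<dots> = av (taylor_coeff a y i) * R ^ i * av s / R"
      using R unfolding j by (simp add: field_simps)
    also have "\<dots> \<le> A * av s / R"
      using b R by (intro divide_right_mono mult_right_mono) auto
    finally show ?thesis by simp
  qed
  then have "av (ps_eval av a x - (\<Sum>i<1. taylor_coeff a y i * s ^ i)) \<le> A * av s / R"
    using av_sums_tail_le[OF S, of "A * av s / R" 1] A R by simp
  then show ?thesis using taylor_coeff_0 unfolding s_def by simp
qed

definition synth_div :: "(nat \<Rightarrow> 'a) \<Rightarrow> 'a \<Rightarrow> nat \<Rightarrow> 'a" where
  "synth_div a c k = av_suminf (\<lambda>i. a (i + k) * c ^ i)"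

lemma synth_div_terms_dominated:
  assumes "R > 0" "av c \<le> R"
  shows "av (a (i + k) * c ^ i) * R ^ k \<le> av (a (i + k)) * R ^ (i + k)"
proof -
  have "av (a (i + k) * c ^ i) \<le> av (a (i + k)) * R ^ i"
    using assms by (simp add: mult_left_mono power_mono)
  from mult_right_mono[OF this, of "R ^ k"] show ?thesis
    using assms(1) by (simp add: power_add mult.assoc)
qed

lemma synth_div_0: "synth_div a c 0 = ps_eval av a c"
  unfolding synth_div_def ps_eval_eq_av_suminf by simp

lemma synth_div_recurrence:
  assumes R: "R > 0" and a: "restricted a R" and c: "av c \<le> R"
  shows "synth_div a c k = a k + c * synth_div a c (Suc k)"
proof -
  have sums: "av_sums (\<lambda>i. a (i + k) * c ^ i) (synth_div a c k)" for k
    unfolding synth_div_def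
    by (rule av_sums_av_suminf[OF dominated_terms_null[where t="\<lambda>i. a (i + k) * c ^ i",
          OF R a synth_div_terms_dominated[OF R c, where a=a]]])
  have shift: "(\<Sum>i<Suc n. a (i + k) * c ^ i) = a k + c * (\<Sum>i<n. a (i + Suc k) * c ^ i)" for n
    unfolding sum.lessThan_Suc_shift by (simp add: sum_distrib_left mult_ac)
  have "av_tendsto av (\<lambda>n. \<Sum>i<Suc n. a (i + k) * c ^ i) (a k + c * synth_div a c (Suc k))"
    unfolding shift by (intro av_tendsto_add av_tendsto_const av_tendsto_cmult sums)
  then have "av_sums (\<lambda>i. a (i + k) * c ^ i) (a k + c * synth_div a c (Suc k))"
    using av_tendsto_Suc_iff[of "\<lambda>n. \<Sum>i<n. a (i + k) * c ^ i"] by blast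
  then show ?thesis using av_tendsto_unique[OF sums] by blast
qed

lemma synth_div_telescope:
  assumes "R > 0" "restricted a R" "av c \<le> R"
  shows "(t - c) * (\<Sum>k<K. synth_div a c (Suc k) * t ^ k)
    = (\<Sum>k<K. a k * t ^ k) + synth_div a c K * t ^ K - synth_div a c 0"
proof (induction K)
  case (Suc K)
  then show ?case
    using synth_div_recurrence[OF assms, of K] by (simp add: algebra_simps)
qed simp

lemma synth_div_restricted:
  assumes R: "R > 0" and a: "restricted a R" and c: "av c \<le> R"
  shows "restricted (synth_div a c) R"
  unfolding synth_div_def
  by (rule dominated_tails_restricted[where t="\<lambda>k i. a (i + k) * c ^ i",
        OF R a synth_div_terms_dominated[OF R c, where a=a]])

lemma synth_div_quotient_restricted:
  assumes R: "R > 0" and a: "restricted a R" and c: "av c \<le> R"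
  shows "restricted (\<lambda>k. synth_div a c (Suc k)) R"
proof -
  have "(\<lambda>k. av (synth_div a c (Suc k)) * R ^ Suc k / R) \<longlonglongrightarrow> 0"
    by (rule tendsto_divide_zero[OF LIMSEQ_Suc[OF synth_div_restricted[OF assms, unfolded restricted_def]]])
  moreover have "av (synth_div a c (Suc k)) * R ^ Suc k / R = av (synth_div a c (Suc k)) * R ^ k" for k
    using R by simp
  ultimately show ?thesis unfolding restricted_def by simp
qed

lemma ps_eval_factor_zero:
  assumes R: "R > 0" and a: "restricted a R" and z0: "av z0 \<le> R" and f0: "ps_eval av a z0 = 0"
    and t: "av t \<le> R"
  shows "ps_eval av a t = (t - z0) * ps_eval av (\<lambda>k. synth_div a z0 (Suc k)) t"
proof -
  define g where "g k = synth_div a z0 (Suc k)" for k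
  have P: "av_sums (\<lambda>k. (t - z0) * (g k * t ^ k)) ((t - z0) * ps_eval av g t)"
    using av_tendsto_cmult[OF ps_sums_ps_eval[OF synth_div_quotient_restricted[OF R a z0] t,
          folded g_def, unfolded ps_sums_def]]
    by (simp add: sum_distrib_left)
  have A: "av_sums (\<lambda>k. a k * t ^ k) (ps_eval av a t)"
    using ps_sums_ps_eval[OF a t] unfolding ps_sums_def .
  have eq: "(\<Sum>k<K. (t - z0) * (g k * t ^ k)) - (\<Sum>k<K. a k * t ^ k) = synth_div a z0 K * t ^ K" for K
    using synth_div_telescope[OF R a z0, of t K] synth_div_0 f0 unfolding g_def
    by (simp add: sum_distrib_left)
  have "\<forall>K. norm (av (synth_div a z0 K * t ^ K)) \<le> av (synth_div a z0 K) * R ^ K"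
    using av_ps_term_le[OF less_imp_le[OF R] t] by simp
  then have "(\<lambda>K. av (synth_div a z0 K * t ^ K)) \<longlonglongrightarrow> 0"
    using synth_div_restricted[OF R a z0] unfolding restricted_def
    by (rule Lim_null_comparison[OF always_eventually])
  then have "av_sums (\<lambda>k. (t - z0) * (g k * t ^ k)) (ps_eval av a t)"
    unfolding eq[symmetric] by (rule av_tendsto_approx[OF A])
  then have "(t - z0) * ps_eval av g t = ps_eval av a t" by (rule av_tendsto_unique[OF P])
  then show ?thesis unfolding g_def by simp
qed


section \<open>Weierstrass degree and zeros\<close>

definition weierstrass_degree :: "(nat \<Rightarrow> 'a) \<Rightarrow> real \<Rightarrow> nat \<Rightarrow> bool" where
  "weierstrass_degree a R N \<longleftrightarrow> restricted a R \<and> (\<forall>k. av (a k) * R ^ k \<le> av (a N) * R ^ N) \<and>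
     (\<forall>k>N. av (a k) * R ^ k < av (a N) * R ^ N)"

lemma weierstrass_degree_coeff_nonzero:
  assumes "R > 0" "weierstrass_degree a R N"
  shows "a N \<noteq> 0"
proof
  assume "a N = 0"
  then have "av (a (Suc N)) * R ^ Suc N < 0" using assms unfolding weierstrass_degree_def by auto
  moreover have "av (a (Suc N)) * R ^ Suc N \<ge> 0" using assms by simp
  ultimately show False by simp
qed

lemma weierstrass_degree_0_nonzero:
  assumes R: "R > 0" and w: "weierstrass_degree a R 0" and u: "av u \<le> R"
  shows "ps_eval av a u \<noteq> 0"
proof
  assume zero: "ps_eval av a u = 0"
  have a: "restricted a R" using w unfolding weierstrass_degree_def by simp
  have "\<forall>i\<ge>1. av (a i * u ^ i) < av (a 0)"
  proof (intro allI impI)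
    fix i :: nat assume "i \<ge> 1"
    then have "av (a i) * R ^ i < av (a 0)" using w unfolding weierstrass_degree_def by simp
    then show "av (a i * u ^ i) < av (a 0)"
      using av_ps_term_le[OF less_imp_le[OF R] u, of a i] by linarith
  qed
  from av_sums_tail_less[OF ps_sums_ps_eval[OF a u, unfolded ps_sums_def] this] zero
  show False by simp
qed

lemma weierstrass_degree_quotient:
  assumes R: "R > 0" and w: "weierstrass_degree a R (Suc n)" and z0: "av z0 \<le> R"
  shows "weierstrass_degree (\<lambda>k. synth_div a z0 (Suc k)) R n"
proof -
  have a: "restricted a R" using w unfolding weierstrass_degree_def by simp
  define \<alpha> where "\<alpha> = av (a (Suc n)) * R ^ Suc n"
  have dom: "av (a (i + k) * z0 ^ i) * R ^ k \<le> av (a (i + k)) * R ^ (i + k)" for i k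
    by (rule synth_div_terms_dominated[OF R z0])
  have shifted: "av (synth_div a z0 (Suc k)) * R ^ k = av (synth_div a z0 (Suc k)) * R ^ Suc k / R" for k
    using R by simp
  have "av (synth_div a z0 (Suc n) - a (Suc n)) * R ^ Suc n < \<alpha>"
    using dominated_tail_less[where t="\<lambda>i. a (i + Suc n) * z0 ^ i", OF R a dom, of 1] w
    unfolding weierstrass_degree_def \<alpha>_def synth_div_def by simp
  then have "av (synth_div a z0 (Suc n) - a (Suc n)) < av (a (Suc n))" unfolding \<alpha>_def using R by simp
  then have top: "av (synth_div a z0 (Suc n)) = av (a (Suc n))"
    using av_add_eq_dominant by fastforce
  have "av (synth_div a z0 (Suc k)) * R ^ Suc k \<le> \<alpha>" for k
    using dominated_tail_le[where t="\<lambda>i. a (i + Suc k) * z0 ^ i", OF R a dom, of \<alpha> 0] w R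
    unfolding weierstrass_degree_def \<alpha>_def synth_div_def by simp
  then have le: "av (synth_div a z0 (Suc k)) * R ^ k \<le> av (synth_div a z0 (Suc n)) * R ^ n" for k
    unfolding shifted top \<alpha>_def using R by (simp add: divide_right_mono)
  obtain X where X: "0 \<le> X" "X < \<alpha>" "\<forall>i\<ge>Suc (Suc n). av (a i) * R ^ i \<le> X"
    using null_seq_uniform_strict_bound[of "\<lambda>i. av (a i) * R ^ i" "Suc (Suc n)" \<alpha>] a R w
    unfolding restricted_def weierstrass_degree_def \<alpha>_def by auto
  have "av (synth_div a z0 (Suc k)) * R ^ Suc k \<le> X" if "k > n" for k
    using dominated_tail_le[where t="\<lambda>i. a (i + Suc k) * z0 ^ i", OF R a dom X(1), of 0] X(3) that
    unfolding synth_div_def by simp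
  then have "av (synth_div a z0 (Suc k)) * R ^ Suc k / R < \<alpha> / R" if "k > n" for k
    using divide_strict_right_mono[OF le_less_trans[OF _ X(2)] R] that by blast
  then have lt: "av (synth_div a z0 (Suc k)) * R ^ k < av (synth_div a z0 (Suc n)) * R ^ n"
    if "k > n" for k
    unfolding shifted top using that R by (simp add: \<alpha>_def)
  show ?thesis
    unfolding weierstrass_degree_def using synth_div_quotient_restricted[OF R a z0] le lt by blast
qed

text \<open>Unlike \<^const>\<open>zero_mult\<close>, this does not require \<open>f z0 = 0\<close>, so order 0 is
  allowed; this is what the induction on the number of zeros needs.\<close>

definition has_order_at :: "('a \<Rightarrow> 'a) \<Rightarrow> 'a \<Rightarrow> nat \<Rightarrow> bool" where
  "has_order_at f z0 k \<longleftrightarrow> (\<exists>b d. d > 0 \<and> (\<forall>z. av (z - z0) < d \<longrightarrow> ps_sums av b (z - z0) (f z)) \<and>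
     (\<forall>i<k. b i = 0) \<and> b k \<noteq> 0)"

lemma zero_mult_iff_has_order_at: "zero_mult av f z0 k \<longleftrightarrow> f z0 = 0 \<and> has_order_at f z0 k"
  unfolding zero_mult_def has_order_at_def by auto

lemma has_order_at_zero_pos:
  assumes "has_order_at F z k" "F z = 0"
  shows "k \<ge> 1"
proof (rule ccontr)
  assume "\<not> k \<ge> 1"
  then have "k = 0" by simp
  moreover obtain b d where "d > 0" "\<forall>u. av (u - z) < d \<longrightarrow> ps_sums av b (u - z) (F u)" "b k \<noteq> 0"
    using assms(1) unfolding has_order_at_def by blast
  moreover have "ps_sums av b 0 (F z)" using calculation(3)[rule_format, of z] calculation(2) by simp
  ultimately show False using ps_sums_at_0[of b "F z"] assms(2) by simp
qed

lemma has_order_at_nonzero: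
  assumes R: "R > 0" and a: "restricted a R" and z: "av z \<le> R"
    and F: "\<forall>u. av u \<le> R \<longrightarrow> F u = ps_eval av a u" and Fz: "F z \<noteq> 0"
  shows "has_order_at F z 0"
  unfolding has_order_at_def
proof (intro exI[of _ "taylor_coeff a z"] exI[of _ R] conjI allI impI)
  fix u assume u: "av (u - z) < R"
  then have "av u \<le> R" using av_add_le[OF z, of "u - z"] by simp
  then show "ps_sums av (taylor_coeff a z) (u - z) (F u)"
    using ps_sums_taylor_coeff[OF R a z, of "u - z"] u F by simp
next
  show "taylor_coeff a z 0 \<noteq> 0" using taylor_coeff_0 F z Fz by simp
qed (use R in simp_all)

lemma ps_sums_mult_linear:
  assumes "ps_sums av b s L"
  shows "ps_sums av (\<lambda>i. w * b i + (case i of 0 \<Rightarrow> 0 | Suc j \<Rightarrow> b j)) s ((w + s) * L)"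
proof -
  define \<gamma> where "\<gamma> i = w * b i + (case i of 0 \<Rightarrow> 0 | Suc j \<Rightarrow> b j)" for i
  have B: "av_sums (\<lambda>i. b i * s ^ i) L" using assms unfolding ps_sums_def .
  have eq: "(\<Sum>i<Suc m. \<gamma> i * s ^ i) = w * (\<Sum>i<Suc m. b i * s ^ i) + s * (\<Sum>i<m. b i * s ^ i)" for m
    unfolding \<gamma>_def distrib_right sum.distrib
    by (subst (2) sum.lessThan_Suc_shift) (simp add: sum_distrib_left distrib_left mult_ac)
  have "av_tendsto av (\<lambda>m. \<Sum>i<Suc m. b i * s ^ i) L"
    using B av_tendsto_Suc_iff[of "\<lambda>n. \<Sum>i<n. b i * s ^ i"] by blast
  then have "av_tendsto av (\<lambda>m. \<Sum>i<Suc m. \<gamma> i * s ^ i) (w * L + s * L)"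
    unfolding eq by (intro av_tendsto_add av_tendsto_cmult B)
  then have "av_sums (\<lambda>i. \<gamma> i * s ^ i) ((w + s) * L)"
    using av_tendsto_Suc_iff[of "\<lambda>n. \<Sum>i<n. \<gamma> i * s ^ i"] by (simp add: distrib_right)
  then show ?thesis unfolding ps_sums_def \<gamma>_def .
qed

lemma has_order_at_mult_linear:
  assumes R: "R > 0" and G: "has_order_at G z k" and z: "av z \<le> R"
    and F: "\<forall>u. av u \<le> R \<longrightarrow> F u = (u - z0) * G u"
  shows "has_order_at F z (if z = z0 then Suc k else k)"
proof -
  obtain b d where d: "d > 0" and bs: "\<forall>u. av (u - z) < d \<longrightarrow> ps_sums av b (u - z) (G u)"
    and b0: "\<forall>i<k. b i = 0" and bk: "b k \<noteq> 0"
    using G unfolding has_order_at_def by blast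
  define \<gamma> where "\<gamma> i = (z - z0) * b i + (case i of 0 \<Rightarrow> 0 | Suc j \<Rightarrow> b j)" for i
  have conv: "ps_sums av \<gamma> (u - z) (F u)" if u: "av (u - z) < min d R" for u
  proof -
    have "av u \<le> R" using av_add_le[OF z, of "u - z"] u by simp
    then have "F u = ((z - z0) + (u - z)) * G u" using F by simp
    then show ?thesis
      unfolding \<gamma>_def using ps_sums_mult_linear[of b "u - z" "G u" "z - z0"] bs u by simp
  qed
  have pos: "min d R > 0" using d R by simp
  show ?thesis
  proof (cases "z = z0")
    case True
    then have "\<forall>i<Suc k. \<gamma> i = 0" "\<gamma> (Suc k) \<noteq> 0"
      unfolding \<gamma>_def using b0 bk by (auto split: nat.splits)
    then show ?thesis
      unfolding has_order_at_def using True conv pos by (intro exI[of _ \<gamma>] exI[of _ "min d R"]) auto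
  next
    case False
    then have "\<forall>i<k. \<gamma> i = 0" "\<gamma> k \<noteq> 0"
      unfolding \<gamma>_def using bk b0 by (auto split: nat.splits)
    then show ?thesis
      unfolding has_order_at_def using False conv pos by (intro exI[of _ \<gamma>] exI[of _ "min d R"]) auto
  qed
qed

end

context alg_closed_nonarch_field
begin

lemma coeff_lt_coeff_0_if_no_root_in_unit_disk:
  fixes P :: "'a poly"
  assumes "P \<noteq> 0" "\<forall>z. av z \<le> 1 \<longrightarrow> poly P z \<noteq> 0"
  shows "\<forall>k\<ge>1. av (coeff P k) < av (coeff P 0)"
  using assms
proof (induction "degree P" arbitrary: P)
  case 0
  have "coeff P 0 \<noteq> 0" using 0(3)[rule_format, of 0] by (simp add: poly_0_coeff_0)
  moreover have "coeff P k = 0" if "k \<ge> 1" for k using 0(1) that by (intro coeff_eq_0) simp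
  ultimately show ?case using av_pos by simp
next
  case (Suc n)
  obtain \<alpha> where \<alpha>: "poly P \<alpha> = 0" using alg_closed[of P] Suc(2) by auto
  have a1: "av \<alpha> > 1" using Suc(4) \<alpha> by (meson not_le)
  have "[:-\<alpha>, 1:] dvd P" using \<alpha> by (simp add: poly_eq_0_iff_dvd)
  then obtain g where g: "P = [:-\<alpha>, 1:] * g" by (elim dvdE)
  have g0: "g \<noteq> 0" using g Suc(3) by auto
  have "degree P = degree [:-\<alpha>, 1:] + degree g" unfolding g by (rule degree_mult_eq) (auto simp: g0)
  then have dg: "n = degree g" using Suc(2) by simp
  have "\<forall>z. av z \<le> 1 \<longrightarrow> poly g z \<noteq> 0" using Suc(4) g by auto
  note IH = Suc(1)[OF dg g0 this] and cg0 = this[rule_format, of 0]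
  have pos: "av (coeff g 0) > 0" using cg0 av_pos by (simp add: poly_0_coeff_0)
  have bnd: "av (coeff g k) \<le> av (coeff g 0)" for k
    using IH by (cases k) (auto simp: less_imp_le)
  have cP0: "coeff P 0 = - \<alpha> * coeff g 0"
    and cPS: "coeff P (Suc k) = - \<alpha> * coeff g (Suc k) + coeff g k" for k
    unfolding g by (simp_all add: mult_pCons_left)
  show ?case
  proof (intro allI impI)
    fix k :: nat assume "k \<ge> 1"
    then obtain j where k: "k = Suc j" by (cases k) auto
    have "av \<alpha> * av (coeff g (Suc j)) < av \<alpha> * av (coeff g 0)"
      using IH a1 by (intro mult_strict_left_mono) auto
    moreover have "1 * av (coeff g 0) < av \<alpha> * av (coeff g 0)"
      using a1 pos by (intro mult_strict_right_mono) auto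
    then have "av (coeff g j) < av \<alpha> * av (coeff g 0)"
      using bnd[of j] by linarith
    ultimately have "av (coeff P (Suc j)) < av \<alpha> * av (coeff g 0)"
      unfolding cPS by (intro av_add_less) simp_all
    then show "av (coeff P k) < av (coeff P 0)" using k cP0 by simp
  qed
qed

lemma exists_root_in_unit_disk:
  fixes P :: "'a poly"
  assumes "coeff P 0 \<noteq> 0" "k \<ge> 1" "av (coeff P k) \<ge> av (coeff P 0)"
  shows "\<exists>z. av z \<le> 1 \<and> poly P z = 0"
  using coeff_lt_coeff_0_if_no_root_in_unit_disk[of P] assms by fastforce

lemma exists_nth_root:
  assumes "N \<ge> 1"
  shows "\<exists>c::'a. c ^ N = y"
proof -
  have "degree (monom (1::'a) N + [:-y:]) = N" using assms
    by (subst degree_add_eq_left) (auto simp: degree_monom_eq)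
  then have "\<exists>c. poly (monom 1 N + [:-y:]) c = 0" using assms by (intro alg_closed) simp
  then obtain c where "poly (monom 1 N + [:-y:]) c = 0" ..
  then show ?thesis by (auto simp: poly_monom)
qed

text \<open>Rescale by an N-th root of \<open>b 0 / b N\<close>, so that the coefficients at 0 and N get equal
  size; a polynomial without roots in the closed unit disk has a strictly dominant constant term.\<close>

lemma exists_small_root:
  assumes N: "1 \<le> N" "N \<le> M" and bN: "b N \<noteq> 0"
  shows "\<exists>s. av s ^ N * av (b N) \<le> av (b 0) \<and> (\<Sum>i\<le>M. b i * s ^ i) = 0"
proof (cases "b 0 = 0")
  case True
  have "(\<Sum>i\<le>M. b i * 0 ^ i) = b 0" by (simp add: sum.atMost_shift)
  then show ?thesis using True N by (intro exI[of _ 0]) (simp add: zero_power)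
next
  case False
  obtain c where c: "c ^ N = b 0 / b N" using exists_nth_root[OF N(1)] by blast
  define P where "P = (\<Sum>k\<le>M. monom (b k * c ^ k) k)"
  have cP: "coeff P j = (if j \<le> M then b j * c ^ j else 0)" for j
    unfolding P_def coeff_sum by (simp add: coeff_monom)
  have "coeff P N = b 0" using cP[of N] N c bN by simp
  then obtain u where u: "av u \<le> 1" "poly P u = 0"
    using exists_root_in_unit_disk[of P N] cP[of 0] False N by auto
  have cN: "av c ^ N * av (b N) = av (b 0)" using arg_cong[OF c, of av] bN by simp
  have "av (c * u) ^ N \<le> av c ^ N" using u by (simp add: power_mult_distrib power_le_one mult_left_le)
  then have "av (c * u) ^ N * av (b N) \<le> av c ^ N * av (b N)" by (rule mult_right_mono) simp
  then have "av (c * u) ^ N * av (b N) \<le> av (b 0)" unfolding cN .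
  moreover have "poly P u = (\<Sum>i\<le>M. b i * c ^ i * u ^ i)"
    unfolding P_def poly_sum by (simp add: poly_monom)
  then have "(\<Sum>i\<le>M. b i * (c * u) ^ i) = poly P u"
    by (simp add: power_mult_distrib mult.assoc)
  ultimately show ?thesis using u by (intro exI[of _ "c * u"]) simp
qed

lemma approx_zero_step:
  assumes R: "R > 0" and w: "weierstrass_degree a R N" and N: "1 \<le> N" "N \<le> M" and t: "av t \<le> R"
    and X: "0 \<le> X" "\<forall>j>M. av (a j) * R ^ j \<le> X"
  shows "\<exists>t'. av t' \<le> R \<and> av (t' - t) ^ N * av (a N) \<le> av (ps_eval av a t) \<and> av (ps_eval av a t') \<le> X"
proof -
  have a: "restricted a R" using w unfolding weierstrass_degree_def by simp
  define b where "b = taylor_coeff a t"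
  have aN: "av (a N) > 0" using weierstrass_degree_coeff_nonzero[OF R w] av_pos by simp
  have "av (b N - a N) * R ^ N < av (a N) * R ^ N"
    unfolding b_def by (rule taylor_coeff_approx[OF R a t]) (use w in \<open>simp add: weierstrass_degree_def\<close>)
  then have "av (b N - a N) < av (a N)" using R by simp
  then have bN: "av (b N) = av (a N)" using av_add_eq_dominant[of "b N - a N" "a N"] by simp
  have "b N \<noteq> 0" using bN aN by auto
  then obtain s where s: "av s ^ N * av (b N) \<le> av (b 0)" and root: "(\<Sum>i\<le>M. b i * s ^ i) = 0"
    using exists_small_root[OF N] by blast
  have "av (b 0) \<le> av (a N) * R ^ N"
    unfolding b_def taylor_coeff_0
    by (rule ps_eval_bound[OF a t]) (use w R in \<open>auto simp: weierstrass_degree_def\<close>)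
  then have "av (a N) * av s ^ N \<le> av (a N) * R ^ N" using s unfolding bN by (simp add: mult.commute)
  then have "av s ^ N \<le> R ^ N" using aN by simp
  moreover obtain j where j: "N = Suc j" using N(1) by (cases N) auto
  ultimately have "av s ^ Suc j \<le> R ^ Suc j" by simp
  then have sR: "av s \<le> R" by (rule power_le_imp_le_base) (use R in simp)
  have S: "av_sums (\<lambda>i. b i * s ^ i) (ps_eval av a (t + s))"
    using ps_sums_taylor_coeff[OF R a t sR] unfolding ps_sums_def b_def .
  have "av (b i * s ^ i) \<le> X" if "i \<ge> Suc M" for i
  proof -
    have "av (b i) * R ^ i \<le> X" unfolding b_def
      by (rule taylor_coeff_bound[OF R a t X(1)]) (use X(2) that in auto)
    then show ?thesis using av_ps_term_le[OF less_imp_le[OF R] sR, of b i] by linarith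
  qed
  then have "av (ps_eval av a (t + s) - (\<Sum>i<Suc M. b i * s ^ i)) \<le> X"
    using av_sums_tail_le[OF S X(1)] by blast
  then have "av (ps_eval av a (t + s)) \<le> X" using root by (simp add: lessThan_Suc_atMost)
  moreover have "av ((t + s) - t) ^ N * av (a N) \<le> av (ps_eval av a t)"
    using s bN unfolding b_def taylor_coeff_0 by simp
  ultimately show ?thesis using av_add_le[OF t sR] by blast
qed

text \<open>Iterating the step with targets \<open>A / (n + 1) ^ N\<close> moves the approximations by at most
  \<open>R / (n + 1)\<close>; by the ultrametric inequality this suffices for convergence, and the limit is a zero
  because power series are Lipschitz on the disk.\<close>

lemma approx_zero_sequence:
  assumes R: "R > 0" and w: "weierstrass_degree a R N" and N: "N \<ge> 1"
  defines "A \<equiv> av (a N) * R ^ N" and "d \<equiv> \<lambda>n. inverse (real (Suc n))"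
  shows "\<exists>ts. \<forall>n. (av (ts n) \<le> R \<and> av (ps_eval av a (ts n)) \<le> A * d n ^ N) \<and>
    av (ts (Suc n) - ts n) \<le> R * d n"
proof (rule dependent_nat_choice[where P="\<lambda>n t. av t \<le> R \<and> av (ps_eval av a t) \<le> A * d n ^ N"
      and Q="\<lambda>n t t'. av (t' - t) \<le> R * d n"])
  have a: "restricted a R" using w unfolding weierstrass_degree_def by simp
  have aN: "av (a N) > 0" using weierstrass_degree_coeff_nonzero[OF R w] av_pos by simp
  have "av (ps_eval av a 0) \<le> A"
    by (rule ps_eval_bound[OF a]) (use w R in \<open>auto simp: A_def weierstrass_degree_def\<close>)
  then show "\<exists>t. av t \<le> R \<and> av (ps_eval av a t) \<le> A * d 0 ^ N"
    using R by (intro exI[of _ 0]) (simp add: d_def)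
  fix t n assume t: "av t \<le> R \<and> av (ps_eval av a t) \<le> A * d n ^ N"
  have X_pos: "A * d (Suc n) ^ N > 0" unfolding A_def d_def using aN R by simp
  obtain M where "\<forall>j\<ge>M. av (a j) * R ^ j \<le> A * d (Suc n) ^ N"
    using restricted_eventually_le[OF a X_pos] by blast
  then have "\<forall>j>max N M. av (a j) * R ^ j \<le> A * d (Suc n) ^ N" by simp
  then obtain t' where t': "av t' \<le> R" "av (t' - t) ^ N * av (a N) \<le> av (ps_eval av a t)"
    "av (ps_eval av a t') \<le> A * d (Suc n) ^ N"
    using approx_zero_step[OF R w N max.cobounded1 _ less_imp_le[OF X_pos]] t by blast
  have "av (t' - t) ^ N * av (a N) \<le> (R * d n) ^ N * av (a N)"
    using t'(2) t unfolding A_def by (simp add: power_mult_distrib mult_ac)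
  then have "av (t' - t) ^ N \<le> (R * d n) ^ N" using aN by simp
  moreover obtain j where "N = Suc j" using N by (cases N) auto
  ultimately have "av (t' - t) ^ Suc j \<le> (R * d n) ^ Suc j" by simp
  then have "av (t' - t) \<le> R * d n"
    by (rule power_le_imp_le_base) (use R in \<open>simp add: d_def\<close>)
  then show "\<exists>t'. (av t' \<le> R \<and> av (ps_eval av a t') \<le> A * d (Suc n) ^ N) \<and> av (t' - t) \<le> R * d n"
    using t' by blast
qed

lemma weierstrass_degree_exists_zero:
  assumes R: "R > 0" and w: "weierstrass_degree a R N" and N: "N \<ge> 1"
  shows "\<exists>z. av z \<le> R \<and> ps_eval av a z = 0"
proof -
  have a: "restricted a R" using w unfolding weierstrass_degree_def by simp
  define A where "A = av (a N) * R ^ N"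
  define d where "d n = inverse (real (Suc n))" for n
  have A_bound: "\<forall>k. av (a k) * R ^ k \<le> A" using w unfolding weierstrass_degree_def A_def by simp
  have A: "A \<ge> 0" unfolding A_def using R by simp
  obtain ts where ts: "\<And>n. av (ts n) \<le> R" "\<And>n. av (ps_eval av a (ts n)) \<le> A * d n ^ N"
    "\<And>n. av (ts (Suc n) - ts n) \<le> R * d n"
    using approx_zero_sequence[OF R w N] unfolding A_def d_def by blast
  have d_null: "d \<longlonglongrightarrow> 0" unfolding d_def by (rule LIMSEQ_inverse_real_of_nat)
  have "(\<lambda>n. av (ts (Suc n) - ts n)) \<longlonglongrightarrow> 0"
    using ts(3)
    by (intro Lim_null_comparison[OF always_eventually tendsto_mult_right_zero[OF d_null, of R]]) simp
  then obtain z where z: "av_tendsto av ts z" using av_convergent_if_steps_null by blast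
  have zR: "av z \<le> R" using av_tendsto_closed_ball[OF z ts(1)] .
  have "\<forall>n. norm (av (ps_eval av a (ts n) - ps_eval av a z)) \<le> A * av (ts n - z) / R"
    using ps_eval_lipschitz[OF R a ts(1) zR A A_bound] by simp
  moreover have "(\<lambda>n. A * av (ts n - z) / R) \<longlonglongrightarrow> 0"
    using z unfolding av_tendsto_def by (intro tendsto_divide_zero tendsto_mult_right_zero)
  ultimately have "(\<lambda>n. av (ps_eval av a (ts n) - ps_eval av a z)) \<longlonglongrightarrow> 0"
    by (rule Lim_null_comparison[OF always_eventually])
  then have to_fz: "av_tendsto av (\<lambda>n. ps_eval av a (ts n)) (ps_eval av a z)"
    by (rule av_tendsto_approx[OF av_tendsto_const])
  have "\<forall>n. norm (av (ps_eval av a (ts n) - 0)) \<le> A * d n ^ N"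
    using ts(2) by simp
  moreover have "(\<lambda>n. A * d n ^ N) \<longlonglongrightarrow> 0"
    using N by (intro tendsto_mult_right_zero tendsto_null_power d_null) simp
  ultimately have "av_tendsto av (\<lambda>n. ps_eval av a (ts n)) 0"
    unfolding av_tendsto_def by (rule Lim_null_comparison[OF always_eventually])
  with to_fz have "ps_eval av a z = 0" by (rule av_tendsto_unique)
  then show ?thesis using zR by auto
qed

definition has_zero_count :: "('a \<Rightarrow> 'a) \<Rightarrow> real \<Rightarrow> nat \<Rightarrow> bool" where
  "has_zero_count F R N \<longleftrightarrow> finite {z. av z \<le> R \<and> F z = 0} \<and>
     (\<exists>m. (\<forall>z. av z \<le> R \<and> F z = 0 \<longrightarrow> has_order_at F z (m z)) \<and>
          (\<Sum>z\<in>{z. av z \<le> R \<and> F z = 0}. m z) = N)"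

lemma has_zero_count_no_zeros:
  assumes "\<forall>z. av z \<le> R \<longrightarrow> F z \<noteq> 0"
  shows "has_zero_count F R 0"
proof -
  have empty: "{z. av z \<le> R \<and> F z = 0} = {}" using assms by auto
  show ?thesis unfolding has_zero_count_def empty using assms by auto
qed

lemma has_zero_count_mult_linear:
  assumes R: "R > 0" and g: "restricted g R" and G: "has_zero_count (ps_eval av g) R n"
    and z0: "av z0 \<le> R" and F: "\<forall>u. av u \<le> R \<longrightarrow> F u = (u - z0) * ps_eval av g u"
  shows "has_zero_count F R (Suc n)"
proof -
  define Z where "Z = {z. av z \<le> R \<and> ps_eval av g z = 0}"
  obtain mg where fin: "finite Z" and mg: "\<forall>z\<in>Z. has_order_at (ps_eval av g) z (mg z)"
    and sum_mg: "(\<Sum>z\<in>Z. mg z) = n"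
    using G unfolding has_zero_count_def Z_def by blast
  have ZF: "{z. av z \<le> R \<and> F z = 0} = insert z0 Z"
    unfolding Z_def using F z0 by auto
  define k0 where "k0 = (if z0 \<in> Z then mg z0 else 0)"
  define m where "m = mg(z0 := Suc k0)"
  have "has_order_at (ps_eval av g) z0 k0"
  proof (cases "z0 \<in> Z")
    case False
    then show ?thesis unfolding k0_def using has_order_at_nonzero[OF R g z0] Z_def z0 by simp
  qed (use mg k0_def in simp)
  then have ord_z0: "has_order_at F z0 (m z0)"
    using has_order_at_mult_linear[OF R _ z0 F] unfolding m_def by fastforce
  have ord_Z: "has_order_at F z (m z)" if "z \<in> Z" "z \<noteq> z0" for z
    using has_order_at_mult_linear[OF R _ _ F, of z] mg that unfolding m_def Z_def by simp
  have ord: "\<forall>z. av z \<le> R \<and> F z = 0 \<longrightarrow> has_order_at F z (m z)"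
  proof (intro allI impI)
    fix z assume "av z \<le> R \<and> F z = 0"
    then have "z \<in> insert z0 Z" using ZF by blast
    then show "has_order_at F z (m z)" using ord_z0 ord_Z by (cases "z = z0") auto
  qed
  have "(\<Sum>z\<in>Z - {z0}. m z) = (\<Sum>z\<in>Z - {z0}. mg z)"
    unfolding m_def by (rule sum.cong) auto
  then have "(\<Sum>z\<in>insert z0 Z. m z) = Suc k0 + (\<Sum>z\<in>Z - {z0}. mg z)"
    using sum.insert_remove[OF fin, of m z0] unfolding m_def by simp
  also have "\<dots> = Suc n"
    using sum.remove[OF fin, of z0 mg] sum_mg unfolding k0_def by (cases "z0 \<in> Z") simp_all
  finally show ?thesis
    unfolding has_zero_count_def ZF using fin ord by (intro conjI exI[of _ m]) simp_all
qed

theorem weierstrass_zero_count: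
  assumes "R > 0" "weierstrass_degree a R N" "\<forall>u. av u \<le> R \<longrightarrow> F u = ps_eval av a u"
  shows "has_zero_count F R N"
  using assms
proof (induction N arbitrary: a F)
  case 0
  then show ?case using weierstrass_degree_0_nonzero by (simp add: has_zero_count_no_zeros)
next
  case (Suc n)
  obtain z0 where z0: "av z0 \<le> R" "ps_eval av a z0 = 0"
    using weierstrass_degree_exists_zero[OF Suc.prems(1,2)] by auto
  define g where "g k = synth_div a z0 (Suc k)" for k
  have a: "restricted a R" using Suc.prems(2) unfolding weierstrass_degree_def by simp
  have w: "weierstrass_degree g R n"
    unfolding g_def by (rule weierstrass_degree_quotient[OF Suc.prems(1,2) z0(1)])
  have "\<forall>u. av u \<le> R \<longrightarrow> F u = (u - z0) * ps_eval av g u"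
    using Suc.prems(3) ps_eval_factor_zero[OF Suc.prems(1) a z0] unfolding g_def by simp
  moreover have "has_zero_count (ps_eval av g) R n" by (rule Suc.IH[OF Suc.prems(1) w]) simp
  moreover have "restricted g R" using w unfolding weierstrass_degree_def by simp
  ultimately show ?case using has_zero_count_mult_linear[OF Suc.prems(1) _ _ z0(1)] by blast
qed

lemma has_zero_count_Suc_ex:
  assumes "has_zero_count F R (Suc n)"
  shows "\<exists>z. av z \<le> R \<and> F z = 0"
proof -
  obtain m where "(\<Sum>z\<in>{z. av z \<le> R \<and> F z = 0}. m z) = Suc n"
    using assms unfolding has_zero_count_def by blast
  then have "{z. av z \<le> R \<and> F z = 0} \<noteq> {}" by (intro notI) simp
  then show ?thesis by blast
qed

lemma has_zero_count_1_ex1: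
  assumes "has_zero_count F R 1"
  shows "\<exists>!z. av z \<le> R \<and> F z = 0"
proof -
  define Z where "Z = {z. av z \<le> R \<and> F z = 0}"
  obtain m where fin: "finite Z" and m: "\<forall>z\<in>Z. has_order_at F z (m z)" and sum_m: "(\<Sum>z\<in>Z. m z) = 1"
    using assms unfolding has_zero_count_def Z_def by blast
  have pos: "m z \<ge> 1" if "z \<in> Z" for z
    using has_order_at_zero_pos m that unfolding Z_def by blast
  obtain u where u: "u \<in> Z" using sum_m by fastforce
  have "v = u" if v: "v \<in> Z" for v
  proof (rule ccontr)
    assume "v \<noteq> u"
    then have "m u + m v \<le> (\<Sum>z\<in>Z. m z)"
      using sum_mono2[OF fin, of "{u, v}" m] u v by simp
    then show False using pos[OF u] pos[OF v] sum_m by simp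
  qed
  then show ?thesis using u unfolding Z_def by blast
qed

end

section \<open>The perturbed family\<close>

locale perturbed_family = alg_closed_nonarch_field av for av :: "'a::field_char_0 \<Rightarrow> real" +
  fixes p :: nat and r :: real and q :: "nat \<Rightarrow> 'a" and lam :: 'a
  assumes prime_p: "prime p" and av_p: "av (of_nat p) = 1 / real p"
    and r_val: "\<exists>c. c \<noteq> 0 \<and> av c = r" and r_gt: "r > 1"
    and q_HB: "in_HB av r q"
    and q_small: "HB_norm av r q < real p powr (- 1 / (real p - 1))"
    and lam: "av (lam - 1) < 1"
begin

abbreviation H :: real where "H \<equiv> HB_norm av r q"

lemma p_ge_2: "p \<ge> 2"
  using prime_p prime_ge_2_nat by blast

lemma r_pos: "r > 0"
  using r_gt by simp

lemma H_lt_1: "H < 1"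
proof -
  have "real p powr (- 1 / (real p - 1)) \<le> real p powr 0"
    using p_ge_2 by (intro powr_mono) (auto simp: divide_nonpos_pos)
  then show ?thesis using q_small p_ge_2 by simp
qed

lemma q_restricted: "restricted q r"
proof -
  obtain c where c: "c \<noteq> 0" "av c = r" using r_val by blast
  obtain L where "ps_sums av q c L" using q_HB c unfolding in_HB_def by auto
  then have "(\<lambda>n. av (q n * c ^ n)) \<longlonglongrightarrow> 0" unfolding ps_sums_def by (rule av_sums_terms_null)
  then show ?thesis unfolding restricted_def using c by simp
qed

lemma q_coeff_le_H: "av (q k) * r ^ k \<le> H"
proof -
  have "convergent (\<lambda>k. av (q k) * r ^ k)"
    using q_restricted unfolding restricted_def convergent_def by blast
  then have "bdd_above (range (\<lambda>k. av (q k) * r ^ k))" by (intro Bseq_bdd_above convergent_imp_Bseq)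
  then show ?thesis unfolding HB_norm_def by (intro cSUP_upper) auto
qed

lemma H_nonneg: "0 \<le> H"
  using q_coeff_le_H[of 0] by (rule order_trans[rotated]) simp

lemma taylor_coeff_q_le_H: "av c \<le> r \<Longrightarrow> av (taylor_coeff q c k) * r ^ k \<le> H"
  by (rule taylor_coeff_bound[OF r_pos q_restricted]) (auto simp: H_nonneg q_coeff_le_H)

lemma av_taylor_coeff_q_lt_1: "av c \<le> r \<Longrightarrow> av (taylor_coeff q c k) < 1"
proof -
  assume "av c \<le> r"
  moreover have "av (taylor_coeff q c k) * 1 \<le> av (taylor_coeff q c k) * r ^ k"
    using r_gt by (intro mult_left_mono) (auto simp: one_le_power)
  ultimately show ?thesis using taylor_coeff_q_le_H[of c k] H_lt_1 by linarith
qed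

lemma av_lam: "av lam = 1"
  using av_add_eq_dominant[of "lam - 1" 1] lam by simp

lemma av_lam_div_p: "av (lam / of_nat p) = real p"
  using av_lam av_p p_ge_2 by simp

lemma av_1_minus_lam_div_p: "av (1 - lam / of_nat p) = real p"
  using av_add_eq_dominant[of 1 "- (lam / of_nat p)"] av_lam_div_p p_ge_2 by simp

definition P_coeff :: "'a \<Rightarrow> nat \<Rightarrow> 'a" where
  "P_coeff c k = lam / of_nat p * of_nat (p choose k) * c ^ (p - k)
     + (1 - lam / of_nat p) * of_nat ((p + 1) choose k) * c ^ (p + 1 - k)"

lemma P_coeff_eq_0: "k \<ge> p + 2 \<Longrightarrow> P_coeff c k = 0"
  unfolding P_coeff_def by (simp add: binomial_eq_0)

lemma P_lam_expand: "P_lam p lam (c + z) = (\<Sum>k<p + 2. P_coeff c k * z ^ k)"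
proof -
  have binom: "(c + z) ^ n = (\<Sum>k<p + 2. of_nat (n choose k) * z ^ k * c ^ (n - k))" if "n \<le> p + 1" for n
  proof -
    have "(c + z) ^ n = (\<Sum>k\<le>n. of_nat (n choose k) * z ^ k * c ^ (n - k))"
      using binomial_ring[of z c n] by (simp add: add.commute)
    also have "\<dots> = (\<Sum>k<p + 2. of_nat (n choose k) * z ^ k * c ^ (n - k))"
      using that by (intro sum.mono_neutral_left) (auto simp: binomial_eq_0)
    finally show ?thesis .
  qed
  have expand: "(c + z) ^ p = (\<Sum>k<p + 2. of_nat (p choose k) * z ^ k * c ^ (p - k))"
    "(c + z) ^ (p + 1) = (\<Sum>k<p + 2. of_nat ((p + 1) choose k) * z ^ k * c ^ (p + 1 - k))"
    by (rule binom, simp)+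
  show ?thesis unfolding P_lam_def expand sum_distrib_left sum.distrib[symmetric]
    by (rule sum.cong[OF refl]) (simp add: P_coeff_def algebra_simps)
qed

lemma ps_sums_P_coeff: "ps_sums av (P_coeff c) z (P_lam p lam (c + z))"
  unfolding P_lam_expand by (rule ps_sums_finite) (simp add: P_coeff_eq_0)

lemma av_P_coeff_le: "av c \<le> 1 \<Longrightarrow> av (P_coeff c k) \<le> real p"
proof -
  assume c: "av c \<le> 1"
  have "av (of_nat (n choose k) :: 'a) * av c ^ (n - k) \<le> 1 * 1" for n
    using c av_of_nat_le_1 by (intro mult_mono) (auto simp: power_le_one)
  then have "av (x * of_nat (n choose k) * c ^ (n - k)) \<le> av x" for x :: 'a and n
    by (simp add: mult_left_le mult.assoc)
  then show ?thesis
    unfolding P_coeff_def using av_lam_div_p av_1_minus_lam_div_p by (metis av_add_le)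
qed

lemma P_coeff_top: "P_coeff c (p + 1) = 1 - lam / of_nat p"
  unfolding P_coeff_def by simp

lemma P_coeff_1_1: "P_coeff 1 1 = of_nat p + 1 - lam / of_nat p"
proof -
  have "(of_nat p :: 'a) \<noteq> 0" using p_ge_2 by simp
  then show ?thesis unfolding P_coeff_def by (simp add: field_simps)
qed

definition PQ_coeff :: "'a \<Rightarrow> nat \<Rightarrow> 'a" where
  "PQ_coeff c k = P_coeff c k + taylor_coeff q c k"

lemma ps_sums_PQ_coeff:
  "av c \<le> r \<Longrightarrow> av z \<le> r \<Longrightarrow> ps_sums av (PQ_coeff c) z (P_lam p lam (c + z) + ps_eval av q (c + z))"
  unfolding PQ_coeff_def
  by (intro ps_sums_add ps_sums_P_coeff ps_sums_taylor_coeff[OF r_pos q_restricted])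

lemma PQ_coeff_restricted: "av c \<le> r \<Longrightarrow> restricted (PQ_coeff c) r"
  unfolding PQ_coeff_def using r_pos
  by (intro restricted_add restricted_finite[of "p + 2"] taylor_coeff_restricted[OF r_pos q_restricted])
    (auto simp: P_coeff_eq_0)

lemma av_PQ_coeff_le: "av c \<le> 1 \<Longrightarrow> av (PQ_coeff c k) \<le> real p"
  unfolding PQ_coeff_def using av_P_coeff_le av_taylor_coeff_q_lt_1[of c k] r_gt p_ge_2
  by (intro av_add_le) auto

lemma av_PQ_coeff_top: "av c \<le> 1 \<Longrightarrow> av (PQ_coeff c (p + 1)) = real p"
  unfolding PQ_coeff_def P_coeff_top
  using av_add_eq_dominant[of "taylor_coeff q c (p + 1)" "1 - lam / of_nat p"]
    av_taylor_coeff_q_lt_1[of c "p + 1"] av_1_minus_lam_div_p r_gt p_ge_2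
  by (simp add: add.commute)

lemma PQ_coeff_high: "k \<ge> p + 2 \<Longrightarrow> PQ_coeff c k = taylor_coeff q c k"
  unfolding PQ_coeff_def by (simp add: P_coeff_eq_0)

definition fixed_point_coeff :: "nat \<Rightarrow> 'a" where
  "fixed_point_coeff k = PQ_coeff 1 k + (if k \<le> 1 then - 1 else 0)"

lemma ps_sums_fixed_point_coeff:
  assumes "av u \<le> r"
  shows "ps_sums av fixed_point_coeff u (P_lam p lam (1 + u) + ps_eval av q (1 + u) - (1 + u))"
proof -
  have "ps_sums av (\<lambda>k. if k \<le> 1 then - 1 else 0) u (\<Sum>k<2. (if k \<le> 1 then - 1 else 0) * u ^ k)"
    by (rule ps_sums_finite) simp
  moreover have "(\<Sum>k<2. (if k \<le> (1::nat) then - 1 else 0) * u ^ k) = - (1 + u)"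
    by (simp add: numeral_2_eq_2)
  ultimately have "ps_sums av (\<lambda>k. if k \<le> 1 then - 1 else 0) u (- (1 + u))" by simp
  from ps_sums_add[OF ps_sums_PQ_coeff[of 1 u] this] assms r_gt
  have "ps_sums av fixed_point_coeff u (P_lam p lam (1 + u) + ps_eval av q (1 + u) + - (1 + u))"
    unfolding fixed_point_coeff_def by simp
  then show ?thesis by (simp only: diff_conv_add_uminus)
qed

lemma fixed_point_coeff_0: "fixed_point_coeff 0 = ps_eval av q 1"
  using ps_sums_at_0[OF ps_sums_fixed_point_coeff[of 0]] r_gt by (simp add: P_lam_def)

lemma av_fixed_point_coeff_1: "av (fixed_point_coeff 1) = real p"
proof -
  have "fixed_point_coeff 1 = (of_nat p + - (lam / of_nat p)) + taylor_coeff q 1 1"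
    unfolding fixed_point_coeff_def PQ_coeff_def P_coeff_1_1 by simp
  moreover have "2 * 2 \<le> real p * real p" using p_ge_2 by (intro mult_mono) auto
  then have "av (of_nat p :: 'a) < av (- (lam / of_nat p))"
    using av_p av_lam_div_p p_ge_2 by (simp add: divide_less_eq)
  then have "av (of_nat p + - (lam / of_nat p)) = real p"
    using av_add_eq_dominant[of "of_nat p" "- (lam / of_nat p)"] av_lam_div_p by simp
  moreover have "av (taylor_coeff q 1 1) < real p"
    using av_taylor_coeff_q_lt_1[of 1 1] r_gt p_ge_2 by simp
  ultimately show ?thesis using av_add_eq_dominant by (simp add: add.commute)
qed

lemma av_fixed_point_coeff_le: "k \<ge> 2 \<Longrightarrow> av (fixed_point_coeff k) \<le> real p"
  unfolding fixed_point_coeff_def using av_PQ_coeff_le[of 1 k] by simp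

lemma weierstrass_degree_fixed_point_coeff:
  assumes \<delta>: "0 < \<delta>" "\<delta> < 1" and c0: "av (fixed_point_coeff 0) = real p * \<delta>"
  shows "weierstrass_degree fixed_point_coeff \<delta> 1"
  unfolding weierstrass_degree_def
proof (intro conjI allI impI)
  have "restricted fixed_point_coeff r"
    unfolding fixed_point_coeff_def using r_gt
    by (intro restricted_add PQ_coeff_restricted restricted_finite[of 2]) auto
  then show "restricted fixed_point_coeff \<delta>"
    using restricted_smaller_radius[OF _ _ less_imp_le[OF less_trans[OF \<delta>(2) r_gt]]] \<delta> by simp
  have small: "av (fixed_point_coeff k) * \<delta> ^ k < real p * \<delta>" if "k \<ge> 2" for k
  proof -
    have "av (fixed_point_coeff k) * \<delta> ^ k \<le> real p * \<delta> ^ k"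
      using av_fixed_point_coeff_le[OF that] \<delta> by (intro mult_right_mono) auto
    also have "\<dots> < real p * \<delta> ^ 1"
      using that \<delta> p_ge_2 by (intro mult_strict_left_mono power_strict_decreasing) auto
    finally show ?thesis by simp
  qed
  fix k :: nat
  show "av (fixed_point_coeff k) * \<delta> ^ k \<le> av (fixed_point_coeff 1) * \<delta> ^ 1"
    using small[of k] c0 av_fixed_point_coeff_1 by (cases "k \<le> 1") (auto simp: le_Suc_eq)
  show "av (fixed_point_coeff k) * \<delta> ^ k < av (fixed_point_coeff 1) * \<delta> ^ 1" if "k > 1"
    using small[of k] that av_fixed_point_coeff_1 by simp
qed

text \<open>In \<open>u = z - 1\<close> the fixed point condition reads \<open>P(1 + u) + Q(1 + u) - (1 + u) = 0\<close>,
  a series of Weierstrass degree 1 on the disk of radius \<open>av (Q 1) / p\<close>.\<close>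

lemma fixed_point_unique:
  "\<exists>!z. av (z - 1) \<le> av (ps_eval av q 1) / real p \<and> P_lam p lam z + ps_eval av q z = z"
proof (cases "ps_eval av q 1 = 0")
  case True
  show ?thesis
  proof (rule ex1I[of _ 1])
    fix z assume "av (z - 1) \<le> av (ps_eval av q 1) / real p \<and> P_lam p lam z + ps_eval av q z = z"
    then have "av (z - 1) \<le> 0" using True by simp
    then show "z = 1" using av_nonneg[of "z - 1"] by simp
  qed (use True in \<open>simp add: P_lam_def\<close>)
next
  case False
  define \<delta> where "\<delta> = av (ps_eval av q 1) / real p"
  have \<delta>_pos: "\<delta> > 0" unfolding \<delta>_def using False av_pos p_ge_2 by simp
  have "av (ps_eval av q 1) \<le> H"
    by (rule ps_eval_bound[OF q_restricted]) (use r_gt H_nonneg q_coeff_le_H in auto)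
  then have \<delta>_lt_1: "\<delta> < 1" unfolding \<delta>_def using H_lt_1 p_ge_2 by (simp add: divide_less_eq)
  define G where "G u = P_lam p lam (1 + u) + ps_eval av q (1 + u) - (1 + u)" for u
  have "\<forall>u. av u \<le> \<delta> \<longrightarrow> G u = ps_eval av fixed_point_coeff u"
    using ps_sums_fixed_point_coeff \<delta>_lt_1 r_gt unfolding G_def
    by (auto intro: ps_eval_eqI[symmetric])
  moreover have "weierstrass_degree fixed_point_coeff \<delta> 1"
    using \<delta>_pos \<delta>_lt_1 fixed_point_coeff_0 p_ge_2
    by (intro weierstrass_degree_fixed_point_coeff) (auto simp: \<delta>_def)
  ultimately have "\<exists>!u. av u \<le> \<delta> \<and> G u = 0"
    using weierstrass_zero_count[OF \<delta>_pos] has_zero_count_1_ex1 by blast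
  then obtain u where u: "av u \<le> \<delta>" "G u = 0" and uniq: "\<And>v. av v \<le> \<delta> \<Longrightarrow> G v = 0 \<Longrightarrow> v = u"
    by blast
  have G_iff: "G (z - 1) = 0 \<longleftrightarrow> P_lam p lam z + ps_eval av q z = z" for z
    unfolding G_def by simp
  show ?thesis
  proof (rule ex1I[of _ "1 + u"])
    show "av (1 + u - 1) \<le> av (ps_eval av q 1) / real p \<and>
        P_lam p lam (1 + u) + ps_eval av q (1 + u) = 1 + u"
      using u G_iff[of "1 + u"] unfolding \<delta>_def by simp
  next
    fix z assume "av (z - 1) \<le> av (ps_eval av q 1) / real p \<and> P_lam p lam z + ps_eval av q z = z"
    then have "z - 1 = u" using uniq[of "z - 1"] G_iff[of z] unfolding \<delta>_def by blast
    then show "z = 1 + u" by (simp add: algebra_simps)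
  qed
qed

lemma h_fix_near_1: "av (h_fix p av q lam - 1) \<le> 1"
proof -
  have "av (h_fix p av q lam - 1) \<le> av (ps_eval av q 1) / real p"
    unfolding h_fix_def by (rule theI'[OF fixed_point_unique, THEN conjunct1])
  moreover have "av (ps_eval av q 1) \<le> H"
    by (rule ps_eval_bound[OF q_restricted]) (use r_gt H_nonneg q_coeff_le_H in auto)
  moreover have "real p \<ge> 2" using p_ge_2 by simp
  ultimately have "av (ps_eval av q 1) / real p \<le> 1" using H_lt_1 by (simp add: divide_le_eq)
  with \<open>av (h_fix p av q lam - 1) \<le> av (ps_eval av q 1) / real p\<close> show ?thesis by linarith
qed

definition Q_coeff :: "nat \<Rightarrow> 'a" where
  "Q_coeff k = PQ_coeff (h_fix p av q lam - 1) k - (if k = 0 then h_fix p av q lam - 1 else 0)"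

definition Q_center :: 'a where "Q_center = Q_coeff 0"

definition Q_radius :: real where "Q_radius = real p * r ^ (p + 1)"

lemma ps_sums_Q_coeff:
  assumes "av z \<le> r"
  shows "ps_sums av Q_coeff z (Q_lam p av q lam z)"
proof -
  define s where "s = h_fix p av q lam - 1"
  have s: "av s \<le> r" unfolding s_def using h_fix_near_1 r_gt by simp
  have "ps_sums av (\<lambda>k. if k = 0 then - s else 0) z (\<Sum>k<1. (if k = 0 then - s else 0) * z ^ k)"
    by (rule ps_sums_finite) simp
  then have const: "ps_sums av (\<lambda>k. if k = 0 then - s else 0) z (- s)" by simp
  have coeff: "Q_coeff = (\<lambda>k. PQ_coeff s k + (if k = 0 then - s else 0))"
    unfolding Q_coeff_def s_def by auto
  have "Q_lam p av q lam z = P_lam p lam (s + z) + ps_eval av q (s + z) + - s"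
    unfolding Q_lam_def Let_def s_def by (simp add: algebra_simps)
  then show ?thesis unfolding coeff by (simp only: ps_sums_add[OF ps_sums_PQ_coeff[OF s assms] const])
qed

lemma Q_coeff_restricted: "restricted Q_coeff r"
  unfolding Q_coeff_def diff_conv_add_uminus using h_fix_near_1 r_gt
  by (intro restricted_add PQ_coeff_restricted restricted_finite[of 1]) auto

lemma Q_radius_gt: "Q_radius > r" "Q_radius > real p"
proof -
  have p2: "real p \<ge> 2" using p_ge_2 by simp
  have "r \<le> r ^ (p + 1)" using power_increasing[of 1 "p + 1" r] r_gt by simp
  then have "2 * r \<le> real p * r ^ (p + 1)" using p2 r_gt by (intro mult_mono) auto
  then show "Q_radius > r" unfolding Q_radius_def using r_gt by simp
  have "1 < r ^ (p + 1)" using r_gt by (intro one_less_power) auto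
  then have "real p * 1 < real p * r ^ (p + 1)" using p2 by (intro mult_strict_left_mono) auto
  then show "Q_radius > real p" unfolding Q_radius_def by simp
qed

lemma av_Q_coeff_high_le_H: "k \<ge> p + 2 \<Longrightarrow> av (Q_coeff k) * r ^ k \<le> H"
  unfolding Q_coeff_def using PQ_coeff_high taylor_coeff_q_le_H h_fix_near_1 r_gt by simp

lemma av_Q_coeff_le:
  assumes "k \<ge> 1"
  shows "av (Q_coeff k) * r ^ k \<le> Q_radius"
proof (cases "k \<le> p + 1")
  case True
  have "av (Q_coeff k) \<le> real p" unfolding Q_coeff_def using assms av_PQ_coeff_le h_fix_near_1 by simp
  moreover have "r ^ k \<le> r ^ (p + 1)" using True r_gt by (intro power_increasing) auto
  ultimately show ?thesis unfolding Q_radius_def using r_gt by (intro mult_mono) auto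
next
  case False
  then show ?thesis using av_Q_coeff_high_le_H[of k] H_lt_1 Q_radius_gt p_ge_2 by simp
qed

lemma av_Q_coeff_less: "k > p + 1 \<Longrightarrow> av (Q_coeff k) * r ^ k < Q_radius"
  using av_Q_coeff_high_le_H[of k] H_lt_1 Q_radius_gt p_ge_2 by simp

lemma av_Q_coeff_top: "av (Q_coeff (p + 1)) * r ^ (p + 1) = Q_radius"
  unfolding Q_coeff_def Q_radius_def using av_PQ_coeff_top h_fix_near_1 by simp

lemma av_Q_center_le: "av Q_center \<le> real p"
  unfolding Q_center_def Q_coeff_def using av_PQ_coeff_le[OF h_fix_near_1, of 0] h_fix_near_1 p_ge_2
  by (intro av_diff_le) auto

lemma av_Q_lam_minus_center_le:
  assumes "av z \<le> r"
  shows "av (Q_lam p av q lam z - Q_center) \<le> Q_radius"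
proof -
  have "av (Q_coeff i * z ^ i) \<le> Q_radius" if "i \<ge> 1" for i
    using av_Q_coeff_le[OF that] av_ps_term_le[OF less_imp_le[OF r_pos] assms, of Q_coeff i]
    by linarith
  then show ?thesis
    using av_sums_tail_le[OF ps_sums_Q_coeff[OF assms, unfolded ps_sums_def], of Q_radius 1]
      Q_radius_gt r_pos unfolding Q_center_def by simp
qed

lemma weierstrass_degree_Q_minus:
  assumes w: "av (w - Q_center) \<le> Q_radius"
  shows "weierstrass_degree (\<lambda>k. Q_coeff k - (if k = 0 then w else 0)) r (p + 1)"
  unfolding weierstrass_degree_def
proof (intro conjI allI impI)
  show "restricted (\<lambda>k. Q_coeff k - (if k = 0 then w else 0)) r"
    unfolding diff_conv_add_uminus using r_pos
    by (intro restricted_add Q_coeff_restricted restricted_finite[of 1]) auto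
  fix k :: nat
  show "av (Q_coeff k - (if k = 0 then w else 0)) * r ^ k
      \<le> av (Q_coeff (p + 1) - (if p + 1 = 0 then w else 0)) * r ^ (p + 1)"
    using av_Q_coeff_le[of k] w av_Q_coeff_top
    by (cases "k = 0") (auto simp: Q_center_def av_minus_commute)
  show "av (Q_coeff k - (if k = 0 then w else 0)) * r ^ k
      < av (Q_coeff (p + 1) - (if p + 1 = 0 then w else 0)) * r ^ (p + 1)" if "k > p + 1"
    using av_Q_coeff_less[OF that] av_Q_coeff_top that by simp
qed

lemma has_zero_count_Q_minus:
  assumes "av (w - Q_center) \<le> Q_radius"
  shows "has_zero_count (\<lambda>u. Q_lam p av q lam u - w) r (p + 1)"
proof (rule weierstrass_zero_count[OF r_pos weierstrass_degree_Q_minus[OF assms]], intro allI impI)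
  fix u assume "av u \<le> r"
  have "ps_sums av (\<lambda>k. if k = 0 then - w else 0) u (\<Sum>k<1. (if k = 0 then - w else 0) * u ^ k)"
    by (rule ps_sums_finite) simp
  then have "ps_sums av (\<lambda>k. Q_coeff k + (if k = 0 then - w else 0)) u (Q_lam p av q lam u + - w)"
    by (intro ps_sums_add[OF ps_sums_Q_coeff[OF \<open>av u \<le> r\<close>]]) simp
  moreover have "(\<lambda>k. Q_coeff k + (if k = 0 then - w else 0))
      = (\<lambda>k. Q_coeff k - (if k = 0 then w else 0))"
    by auto
  ultimately have "ps_sums av (\<lambda>k. Q_coeff k - (if k = 0 then w else 0)) u (Q_lam p av q lam u - w)"
    by simp
  then show "Q_lam p av q lam u - w = ps_eval av (\<lambda>k. Q_coeff k - (if k = 0 then w else 0)) u"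
    by (simp add: ps_eval_eqI)
qed

lemma Q_lam_image: "Q_lam p av q lam ` Bdisk av 0 r = Bdisk av Q_center Q_radius"
proof
  show "Q_lam p av q lam ` Bdisk av 0 r \<subseteq> Bdisk av Q_center Q_radius"
    using av_Q_lam_minus_center_le unfolding Bdisk_def by auto
  show "Bdisk av Q_center Q_radius \<subseteq> Q_lam p av q lam ` Bdisk av 0 r"
  proof
    fix w assume "w \<in> Bdisk av Q_center Q_radius"
    then have "has_zero_count (\<lambda>u. Q_lam p av q lam u - w) r (Suc p)"
      using has_zero_count_Q_minus unfolding Bdisk_def by simp
    then obtain z where "av z \<le> r" "Q_lam p av q lam z - w = 0"
      using has_zero_count_Suc_ex by blast
    then show "w \<in> Q_lam p av q lam ` Bdisk av 0 r" unfolding Bdisk_def by force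
  qed
qed

lemma Bdisk_psubset_Q_disk: "Bdisk av 0 r \<subset> Bdisk av Q_center Q_radius"
proof
  show "Bdisk av 0 r \<subseteq> Bdisk av Q_center Q_radius"
    unfolding Bdisk_def using Q_radius_gt av_Q_center_le by (auto intro: av_diff_le)
  obtain c where c: "c \<noteq> 0" "av c = r" using r_val by blast
  define y where "y = Q_center + c ^ (p + 1) / of_nat p"
  have d: "av (c ^ (p + 1) / of_nat p) = Q_radius"
    unfolding Q_radius_def using c av_p p_ge_2 by simp
  then have "av y = Q_radius"
    unfolding y_def using av_add_eq_dominant[of Q_center] av_Q_center_le Q_radius_gt by simp
  then have "y \<in> Bdisk av Q_center Q_radius" "y \<notin> Bdisk av 0 r"
    unfolding Bdisk_def using d Q_radius_gt by (simp_all add: y_def)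
  then show "Bdisk av 0 r \<noteq> Bdisk av Q_center Q_radius" by blast
qed

end

theorem proposition3p6:
  fixes p :: nat and av :: "'a::field_char_0 \<Rightarrow> real"
    and r :: real and q :: "nat \<Rightarrow> 'a" and lam :: 'a
  assumes Cp: "is_Cp p av"
    and r_val: "\<exists>c. c \<noteq> 0 \<and> av c = r" and r_gt: "r > 1"
    and q_HB: "in_HB av r q"
    and q_small: "HB_norm av r q < real p powr (- 1 / (real p - 1))"
    and lam: "av (lam - 1) < 1"
  shows "(\<exists>c R. Q_lam p av q lam ` Bdisk av 0 r = Bdisk av c R) \<and>
         Bdisk av 0 r \<subset> Q_lam p av q lam ` Bdisk av 0 r \<and>
         (\<forall>w \<in> Q_lam p av q lam ` Bdisk av 0 r.
            finite {z \<in> Bdisk av 0 r. Q_lam p av q lam z = w} \<and>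
            (\<exists>m :: 'a \<Rightarrow> nat.
               (\<forall>z \<in> Bdisk av 0 r. Q_lam p av q lam z = w \<longrightarrow>
                   zero_mult av (\<lambda>u. Q_lam p av q lam u - w) z (m z)) \<and>
               (\<Sum>z \<in> {z \<in> Bdisk av 0 r. Q_lam p av q lam z = w}. m z) = p + 1))"
proof -
  interpret perturbed_family av p r q lam
    using is_Cp_imp_alg_closed_nonarch_field[OF Cp] Cp r_val r_gt q_HB q_small lam
    unfolding perturbed_family_def perturbed_family_axioms_def is_Cp_def by blast
  have zeros: "{z \<in> Bdisk av 0 r. Q_lam p av q lam z = w} = {z. av z \<le> r \<and> Q_lam p av q lam z - w = 0}"
    for w unfolding Bdisk_def by auto
  show ?thesis
  proof (intro conjI ballI)
    show "\<exists>c R. Q_lam p av q lam ` Bdisk av 0 r = Bdisk av c R"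
      using Q_lam_image by blast
    show "Bdisk av 0 r \<subset> Q_lam p av q lam ` Bdisk av 0 r"
      unfolding Q_lam_image by (rule Bdisk_psubset_Q_disk)
    fix w assume "w \<in> Q_lam p av q lam ` Bdisk av 0 r"
    then have "w \<in> Bdisk av Q_center Q_radius" by (simp only: Q_lam_image)
    then have "av (w - Q_center) \<le> Q_radius" unfolding Bdisk_def by simp
    then have "has_zero_count (\<lambda>u. Q_lam p av q lam u - w) r (p + 1)" by (rule has_zero_count_Q_minus)
    then show "finite {z \<in> Bdisk av 0 r. Q_lam p av q lam z = w}"
      "\<exists>m. (\<forall>z \<in> Bdisk av 0 r. Q_lam p av q lam z = w \<longrightarrow>
              zero_mult av (\<lambda>u. Q_lam p av q lam u - w) z (m z)) \<and>
           (\<Sum>z \<in> {z \<in> Bdisk av 0 r. Q_lam p av q lam z = w}. m z) = p + 1"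
      unfolding has_zero_count_def zeros zero_mult_iff_has_order_at by (auto simp: Bdisk_def)
  qed
qed

end
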